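(* Let $R$ be a ring satisfying condition (C): every subring of $Q_{\max}^r(R)$ containing $R$ is flat as a left $R$-module. Then for every successor ordinal $\alpha$, the Gabriel filter $\mathcal{E}_\alpha$ (defined in the context) has a basis consisting of finitely generated right ideals, i.e. for every $I\in\mathcal{E}_\alpha$ there is a finitely generated right ideal $J\in\mathcal{E}_\alpha$ with $J\subseteq I$.
   Context: Rings are associative with unit; modules are right modules. For a Gabriel filter $\mathcal{E}$ of right ideals of $R$ (equivalently a hereditary torsion theory whose torsion modules $M$ are those with $\{r: mr=0\}\in\mathcal{E}$ for all $m\in M$), $R_{\mathcal{E}}=\varinjlim_{I\in\mathcal{E}}\mathrm{Hom}_R(I,R/\mathcal{T}R)$ is its right ring of quotients. The rings $Q_\alpha\subseteq Q_{\max}^r(R)$ and filters $\mathcal{E}_\alpha$ are defined by transfinite induction: $\mathcal{E}_0$ is the set of dense right ideals and $Q_0=Q_{\max}^r(R)$; $\mathcal{E}_{\alpha+1}=\{I \text{ right ideal of } R: IQ_\alpha=Q_\alpha\}$ (the Gabriel filter of the torsion theory whose torsion modules are the $M$ with $M\otimes_R Q_\alpha=0$) and $Q_{\alpha+1}=R_{\mathcal{E}_{\alpha+1}}$; for limit $\alpha$, $\mathcal{E}_\alpha=\bigcap_{\beta<\alpha}\mathcal{E}_\beta$ and $Q_\alpha=R_{\mathcal{E}_\alpha}$. *)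

theory Defs
  imports "HOL-Algebra.Subrings" "HOL-Algebra.AbelCoset"
begin

definition right_ideal :: "('a, 'm) ring_scheme \<Rightarrow> 'a set \<Rightarrow> bool" where
  "right_ideal R I \<longleftrightarrow> additive_subgroup I R \<and>
     (\<forall>x\<in>I. \<forall>r\<in>carrier R. x \<otimes>\<^bsub>R\<^esub> r \<in> I)"

definition right_ideal_gen :: "('a, 'm) ring_scheme \<Rightarrow> 'a set \<Rightarrow> 'a set" where
  "right_ideal_gen R F = \<Inter>{J. right_ideal R J \<and> F \<subseteq> J}"

definition fg_right_ideal :: "('a, 'm) ring_scheme \<Rightarrow> 'a set \<Rightarrow> bool" where
  "fg_right_ideal R I \<longleftrightarrow> right_ideal R I \<and>
     (\<exists>F. finite F \<and> F \<subseteq> carrier R \<and> I = right_ideal_gen R F)"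

definition dense_right_ideal :: "('a, 'm) ring_scheme \<Rightarrow> 'a set \<Rightarrow> bool" where
  "dense_right_ideal R D \<longleftrightarrow> right_ideal R D \<and>
     (\<forall>r1\<in>carrier R. \<forall>r2\<in>carrier R. r2 \<noteq> \<zero>\<^bsub>R\<^esub> \<longrightarrow>
        (\<exists>r\<in>carrier R. r1 \<otimes>\<^bsub>R\<^esub> r \<in> D \<and> r2 \<otimes>\<^bsub>R\<^esub> r \<noteq> \<zero>\<^bsub>R\<^esub>))"

section \<open>The maximal right ring of quotients as direct limit of Hom_R(D,R), D dense\<close>

definition rhom_on :: "('a, 'm) ring_scheme \<Rightarrow> 'a set \<Rightarrow> ('a \<Rightarrow> 'a) \<Rightarrow> bool" where
  "rhom_on R D f \<longleftrightarrow> (\<forall>x\<in>D. f x \<in> carrier R) \<and>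
     (\<forall>x\<in>D. \<forall>y\<in>D. f (x \<oplus>\<^bsub>R\<^esub> y) = f x \<oplus>\<^bsub>R\<^esub> f y) \<and>
     (\<forall>x\<in>D. \<forall>r\<in>carrier R. f (x \<otimes>\<^bsub>R\<^esub> r) = f x \<otimes>\<^bsub>R\<^esub> r)"

definition qrep :: "('a, 'm) ring_scheme \<Rightarrow> 'a set \<times> ('a \<Rightarrow> 'a) \<Rightarrow> bool" where
  "qrep R p \<longleftrightarrow> dense_right_ideal R (fst p) \<and> rhom_on R (fst p) (snd p)"

definition qequiv :: "('a, 'm) ring_scheme \<Rightarrow> 'a set \<times> ('a \<Rightarrow> 'a) \<Rightarrow> 'a set \<times> ('a \<Rightarrow> 'a) \<Rightarrow> bool" where
  "qequiv R p q \<longleftrightarrow> (\<exists>D. dense_right_ideal R D \<and> D \<subseteq> fst p \<inter> fst q \<and>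
      (\<forall>x\<in>D. snd p x = snd q x))"

definition qclass :: "('a, 'm) ring_scheme \<Rightarrow> 'a set \<times> ('a \<Rightarrow> 'a) \<Rightarrow> ('a set \<times> ('a \<Rightarrow> 'a)) set" where
  "qclass R p = {q. qrep R q \<and> qequiv R p q}"

definition Qmax_carrier :: "('a, 'm) ring_scheme \<Rightarrow> ('a set \<times> ('a \<Rightarrow> 'a)) set set" where
  "Qmax_carrier R = {qclass R p | p. qrep R p}"

definition qadd :: "('a, 'm) ring_scheme \<Rightarrow> ('a set \<times> ('a \<Rightarrow> 'a)) set \<Rightarrow> ('a set \<times> ('a \<Rightarrow> 'a)) set
    \<Rightarrow> ('a set \<times> ('a \<Rightarrow> 'a)) set" where
  "qadd R A B = (let p = (SOME p. p \<in> A); q = (SOME q. q \<in> B) in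
     qclass R (fst p \<inter> fst q, \<lambda>x. add R (snd p x) (snd q x)))"

definition qmul :: "('a, 'm) ring_scheme \<Rightarrow> ('a set \<times> ('a \<Rightarrow> 'a)) set \<Rightarrow> ('a set \<times> ('a \<Rightarrow> 'a)) set
    \<Rightarrow> ('a set \<times> ('a \<Rightarrow> 'a)) set" where
  "qmul R A B = (let p = (SOME p. p \<in> A); q = (SOME q. q \<in> B) in
     qclass R ({x \<in> fst q. snd q x \<in> fst p}, \<lambda>x. snd p (snd q x)))"

definition qemb :: "('a, 'm) ring_scheme \<Rightarrow> 'a \<Rightarrow> ('a set \<times> ('a \<Rightarrow> 'a)) set" where
  "qemb R r = qclass R (carrier R, \<lambda>x. r \<otimes>\<^bsub>R\<^esub> x)"

definition Qmax :: "('a, 'm) ring_scheme \<Rightarrow> ('a set \<times> ('a \<Rightarrow> 'a)) set ring" where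
  "Qmax R = \<lparr> carrier = Qmax_carrier R, mult = qmul R, one = qemb R \<one>\<^bsub>R\<^esub>,
             zero = qemb R \<zero>\<^bsub>R\<^esub>, add = qadd R \<rparr>"

definition qsum :: "('a, 'm) ring_scheme \<Rightarrow> ('a set \<times> ('a \<Rightarrow> 'a)) set list \<Rightarrow> ('a set \<times> ('a \<Rightarrow> 'a)) set" where
  "qsum R xs = foldr (qadd R) xs (qemb R \<zero>\<^bsub>R\<^esub>)"

text \<open>For a Gabriel filter E of right ideals with R E-torsionfree and E contained in the
  dense filter, R_E = lim_{I \<in> E} Hom_R(I,R) is identified with the elements of Q_max
  having a representative defined on an ideal of E.\<close>
definition ring_of_quotients :: "('a, 'm) ring_scheme \<Rightarrow> 'a set set \<Rightarrow> ('a set \<times> ('a \<Rightarrow> 'a)) set set" where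
  "ring_of_quotients R E = {A \<in> Qmax_carrier R. \<exists>p\<in>A. fst p \<in> E}"

definition ideal_ext :: "('a, 'm) ring_scheme \<Rightarrow> 'a set \<Rightarrow> ('a set \<times> ('a \<Rightarrow> 'a)) set set
    \<Rightarrow> ('a set \<times> ('a \<Rightarrow> 'a)) set set" where
  "ideal_ext R I Q = {qsum R (map (\<lambda>(i, q). qmul R (qemb R i) q) xs) | xs. set xs \<subseteq> I \<times> Q}"

definition is_succ :: "'o::wellorder \<Rightarrow> bool" where
  "is_succ \<alpha> \<longleftrightarrow> (\<exists>\<beta>. \<beta> < \<alpha> \<and> (\<forall>\<gamma>. \<not> (\<beta> < \<gamma> \<and> \<gamma> < \<alpha>)))"

definition filt_step :: "('a, 'm) ring_scheme \<Rightarrow> ('o::wellorder \<Rightarrow> 'a set set) \<Rightarrow> 'o \<Rightarrow> 'a set set" where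
  "filt_step R h \<alpha> =
    (if is_succ \<alpha> then
       (let \<beta> = (THE \<beta>. \<beta> < \<alpha> \<and> (\<forall>\<gamma>. \<not> (\<beta> < \<gamma> \<and> \<gamma> < \<alpha>)));
            Q = ring_of_quotients R (h \<beta>)
        in {I. right_ideal R I \<and> ideal_ext R I Q = Q})
     else if (\<exists>\<beta>. \<beta> < \<alpha>) then {I. right_ideal R I \<and> (\<forall>\<beta><\<alpha>. I \<in> h \<beta>)}
     else {D. dense_right_ideal R D})"

text \<open>E_alpha; Q_alpha = ring_of_quotients R (E_alpha) (for alpha = 0 this is all of Q_max)\<close>
definition filt_seq :: "('a, 'm) ring_scheme \<Rightarrow> 'o::wellorder \<Rightarrow> 'a set set" where
  "filt_seq R = wfrec {(x, y). x < y} (filt_step R)"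

text \<open>Formal Z-combinations of pairs (i, s) and the relation subgroup defining I \<otimes>_R S\<close>
definition fdelta :: "'b \<Rightarrow> 'b \<Rightarrow> int" where
  "fdelta p = (\<lambda>q. if q = p then 1 else 0)"

inductive_set tensor_rel ::
  "('a, 'm) ring_scheme \<Rightarrow> 'a set \<Rightarrow> ('a set \<times> ('a \<Rightarrow> 'a)) set set
     \<Rightarrow> ('a \<times> ('a set \<times> ('a \<Rightarrow> 'a)) set \<Rightarrow> int) set"
  for R I S where
  zero: "(\<lambda>_. 0) \<in> tensor_rel R I S"
| add_l: "\<lbrakk> i \<in> I; i' \<in> I; s \<in> S \<rbrakk> \<Longrightarrow>
     (\<lambda>p. fdelta (i \<oplus>\<^bsub>R\<^esub> i', s) p - fdelta (i, s) p - fdelta (i', s) p) \<in> tensor_rel R I S"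
| add_r: "\<lbrakk> i \<in> I; s \<in> S; s' \<in> S \<rbrakk> \<Longrightarrow>
     (\<lambda>p. fdelta (i, qadd R s s') p - fdelta (i, s) p - fdelta (i, s') p) \<in> tensor_rel R I S"
| balanced: "\<lbrakk> i \<in> I; r \<in> carrier R; s \<in> S \<rbrakk> \<Longrightarrow>
     (\<lambda>p. fdelta (i \<otimes>\<^bsub>R\<^esub> r, s) p - fdelta (i, qmul R (qemb R r) s) p) \<in> tensor_rel R I S"
| diff: "\<lbrakk> u \<in> tensor_rel R I S; v \<in> tensor_rel R I S \<rbrakk> \<Longrightarrow>
     (\<lambda>p. u p - v p) \<in> tensor_rel R I S"

text \<open>S is flat as a left R-module (flatness test): for every right ideal I the
  canonical map I \<otimes>_R S \<rightarrow> S is injective.\<close>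
definition left_flat_sub :: "('a, 'm) ring_scheme \<Rightarrow> ('a set \<times> ('a \<Rightarrow> 'a)) set set \<Rightarrow> bool" where
  "left_flat_sub R S \<longleftrightarrow> (\<forall>I xs. right_ideal R I \<longrightarrow> set xs \<subseteq> I \<times> S \<longrightarrow>
      qsum R (map (\<lambda>(i, s). qmul R (qemb R i) s) xs) = qemb R \<zero>\<^bsub>R\<^esub> \<longrightarrow>
      (\<lambda>p. \<Sum>x\<leftarrow>xs. fdelta x p) \<in> tensor_rel R I S)"

definition condition_C :: "('a, 'm) ring_scheme \<Rightarrow> bool" where
  "condition_C R \<longleftrightarrow> (\<forall>S. subring S (Qmax R) \<and> qemb R ` carrier R \<subseteq> S \<longrightarrow> left_flat_sub R S)"

end

theory Submission
  imports Defs
begin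

text \<open>
  For a successor \<open>\<alpha> = \<beta> + 1\<close>, an ideal \<open>I \<in> \<E>\<^sub>\<alpha>\<close> satisfies \<open>I Q\<^sub>\<beta> = Q\<^sub>\<beta>\<close>, so
  \<open>1 = \<Sum> i\<^sub>k q\<^sub>k\<close> with finitely many \<open>i\<^sub>k \<in> I\<close>, \<open>q\<^sub>k \<in> Q\<^sub>\<beta>\<close>, and the right ideal generated
  by the \<open>i\<^sub>k\<close> already lies in \<open>\<E>\<^sub>\<alpha>\<close>. This needs \<open>Q\<^sub>\<beta>\<close> (the classes of \<open>Q\<^sub>m\<^sub>a\<^sub>x\<close> having a
  representative defined on an ideal of \<open>\<E>\<^sub>\<beta>\<close>) to be a subring of \<open>Q\<^sub>m\<^sub>a\<^sub>x\<close> containing \<open>R\<close>.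
  That holds as soon as \<open>\<E>\<^sub>\<beta>\<close> is closed under preimages of partial homomorphisms, a property
  of the dense filter that passes to intersections and, by flatness of the intermediate rings
  (condition (C)), to the successor filter \<open>{I. I Q = Q}\<close>.
\<close>

section \<open>Right ideals and partial homomorphisms\<close>

context ring
begin

lemma right_idealI:
  assumes "I \<subseteq> carrier R" "\<zero> \<in> I" "\<And>x y. x \<in> I \<Longrightarrow> y \<in> I \<Longrightarrow> x \<oplus> y \<in> I"
    "\<And>x. x \<in> I \<Longrightarrow> \<ominus> x \<in> I" "\<And>x r. x \<in> I \<Longrightarrow> r \<in> carrier R \<Longrightarrow> x \<otimes> r \<in> I"
  shows "right_ideal R I"
proof -
  have "subgroup I (add_monoid R)"
    using assms by (auto intro!: subgroup.intro simp: a_inv_def[symmetric])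
  then show ?thesis
    unfolding right_ideal_def using assms(5) by (auto intro: additive_subgroupI)
qed

lemma right_idealD:
  assumes "right_ideal R I"
  shows "I \<subseteq> carrier R" "\<zero> \<in> I" "\<And>x y. x \<in> I \<Longrightarrow> y \<in> I \<Longrightarrow> x \<oplus> y \<in> I"
    "\<And>x. x \<in> I \<Longrightarrow> \<ominus> x \<in> I" "\<And>x r. x \<in> I \<Longrightarrow> r \<in> carrier R \<Longrightarrow> x \<otimes> r \<in> I"
  using assms unfolding right_ideal_def
  by (auto intro: additive_subgroup.a_closed additive_subgroup.zero_closed
      additive_subgroup.a_inv_closed dest: additive_subgroup.a_subset)

lemma right_ideal_minus_closed:
  "right_ideal R I \<Longrightarrow> x \<in> I \<Longrightarrow> y \<in> I \<Longrightarrow> x \<ominus> y \<in> I"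
  unfolding a_minus_def by (metis right_idealD(3,4))

lemma right_ideal_carrier: "right_ideal R (carrier R)"
  by (rule right_idealI) auto


lemma right_ideal_right_ideal_gen:
  assumes "F \<subseteq> carrier R"
  shows "right_ideal R (right_ideal_gen R F)"
proof -
  define \<F> where "\<F> = {J. right_ideal R J \<and> F \<subseteq> J}"
  have "carrier R \<in> \<F>" unfolding \<F>_def using assms right_ideal_carrier by blast
  moreover have ri: "\<And>J. J \<in> \<F> \<Longrightarrow> right_ideal R J" unfolding \<F>_def by blast
  ultimately have "right_ideal R (\<Inter>\<F>)"
  proof (intro right_idealI)
    show "\<Inter>\<F> \<subseteq> carrier R" if "carrier R \<in> \<F>" using that by blast
    show "\<zero> \<in> \<Inter>\<F>" using right_idealD(2)[OF ri] by blast
    show "x \<oplus> y \<in> \<Inter>\<F>" if "x \<in> \<Inter>\<F>" "y \<in> \<Inter>\<F>" for x y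
      using that right_idealD(3)[OF ri] by blast
    show "\<ominus> x \<in> \<Inter>\<F>" if "x \<in> \<Inter>\<F>" for x using that right_idealD(4)[OF ri] by blast
    show "x \<otimes> r \<in> \<Inter>\<F>" if "x \<in> \<Inter>\<F>" "r \<in> carrier R" for x r
      using that right_idealD(5)[OF ri] by blast
  qed
  then show ?thesis unfolding right_ideal_gen_def \<F>_def .
qed

lemma right_ideal_gen_subset: "F \<subseteq> right_ideal_gen R F"
  unfolding right_ideal_gen_def by blast

lemma right_ideal_gen_minimal: "right_ideal R I \<Longrightarrow> F \<subseteq> I \<Longrightarrow> right_ideal_gen R F \<subseteq> I"
  unfolding right_ideal_gen_def by blast

lemma fg_right_ideal_gen:
  "finite F \<Longrightarrow> F \<subseteq> carrier R \<Longrightarrow> fg_right_ideal R (right_ideal_gen R F)"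
  unfolding fg_right_ideal_def using right_ideal_right_ideal_gen by blast

definition lmult_plus :: "'a \<Rightarrow> 'a set \<Rightarrow> 'a set" where
  "lmult_plus r D = {y. \<exists>b\<in>carrier R. \<exists>d\<in>D. y = r \<otimes> b \<oplus> d}"

lemma right_ideal_lmult_plus:
  assumes D: "right_ideal R D" and r: "r \<in> carrier R"
  shows "right_ideal R (lmult_plus r D)"
proof -
  define I where "I = lmult_plus r D"
  note DD = right_idealD[OF D]
  have "right_ideal R I"
  proof (rule right_idealI)
    show "I \<subseteq> carrier R" unfolding I_def lmult_plus_def using DD(1) r by auto
    have "\<zero> = r \<otimes> \<zero> \<oplus> \<zero>" using r by simp
    then show "\<zero> \<in> I" unfolding I_def lmult_plus_def using DD(2) by blast
  next
    fix x y assume "x \<in> I" "y \<in> I"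
    then obtain b d b' d' where bd: "b \<in> carrier R" "d \<in> D" "x = r \<otimes> b \<oplus> d"
      "b' \<in> carrier R" "d' \<in> D" "y = r \<otimes> b' \<oplus> d'" unfolding I_def lmult_plus_def by blast
    have "x \<oplus> y = r \<otimes> (b \<oplus> b') \<oplus> (d \<oplus> d')"
      using bd DD(1) r by (simp add: r_distr a_ac subsetD)
    then show "x \<oplus> y \<in> I" unfolding I_def lmult_plus_def using bd DD by blast
  next
    fix x assume "x \<in> I"
    then obtain b d where bd: "b \<in> carrier R" "d \<in> D" "x = r \<otimes> b \<oplus> d" unfolding I_def lmult_plus_def by blast
    have "\<ominus> x = r \<otimes> (\<ominus> b) \<oplus> \<ominus> d"
      using bd DD(1) r by (simp add: r_minus minus_add subsetD)
    then show "\<ominus> x \<in> I" unfolding I_def lmult_plus_def using bd DD by blast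
  next
    fix x t assume "x \<in> I" "t \<in> carrier R"
    then obtain b d where bd: "b \<in> carrier R" "d \<in> D" "x = r \<otimes> b \<oplus> d" unfolding I_def lmult_plus_def by blast
    have "x \<otimes> t = r \<otimes> (b \<otimes> t) \<oplus> d \<otimes> t"
      using bd DD(1) r \<open>t \<in> carrier R\<close> by (simp add: l_distr m_assoc subsetD)
    then show "x \<otimes> t \<in> I" unfolding I_def lmult_plus_def using bd DD \<open>t \<in> carrier R\<close> by blast
  qed
  then show ?thesis unfolding I_def .
qed

lemma lmult_plus_memI: "b \<in> carrier R \<Longrightarrow> d \<in> D \<Longrightarrow> r \<otimes> b \<oplus> d \<in> lmult_plus r D"
  unfolding lmult_plus_def by blast

lemma subset_lmult_plus:
  assumes "right_ideal R D" "r \<in> carrier R"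
  shows "D \<subseteq> lmult_plus r D"
proof
  fix d assume "d \<in> D"
  then show "d \<in> lmult_plus r D"
    using lmult_plus_memI[OF zero_closed \<open>d \<in> D\<close>, of r] assms(2)
      subsetD[OF right_idealD(1)[OF assms(1)] \<open>d \<in> D\<close>] by simp
qed

lemma self_in_lmult_plus:
  assumes "right_ideal R D" "r \<in> carrier R"
  shows "r \<in> lmult_plus r D"
  using lmult_plus_memI[OF one_closed right_idealD(2)[OF assms(1)]] r_one[OF assms(2)] r_zero[OF assms(2)]
  by metis

lemma lmult_plus_lift_ex:
  assumes D: "right_ideal R D" and r: "r \<in> carrier R" and i: "i \<in> lmult_plus r D"
  shows "\<exists>x. x \<in> carrier R \<and> r \<otimes> x \<ominus> i \<in> D"
proof -
  note DD = right_idealD[OF D]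
  obtain b d where bd: "b \<in> carrier R" "d \<in> D" "i = r \<otimes> b \<oplus> d" using i unfolding lmult_plus_def by blast
  have "r \<otimes> b \<ominus> i = \<ominus> d"
    unfolding bd(3) using r bd(1) subsetD[OF DD(1) bd(2)] by algebra
  then have "r \<otimes> b \<ominus> i \<in> D" using DD(4)[OF bd(2)] by (simp only:)
  then show ?thesis using bd(1) by blast
qed

lemma dense_right_idealD:
  assumes "dense_right_ideal R D" "r1 \<in> carrier R" "r2 \<in> carrier R" "r2 \<noteq> \<zero>"
  obtains r where "r \<in> carrier R" "r1 \<otimes> r \<in> D" "r2 \<otimes> r \<noteq> \<zero>"
  using assms unfolding dense_right_ideal_def by blast

lemma dense_right_ideal_imp_right_ideal: "dense_right_ideal R D \<Longrightarrow> right_ideal R D"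
  unfolding dense_right_ideal_def by blast

lemma dense_right_ideal_carrier: "dense_right_ideal R (carrier R)"
  unfolding dense_right_ideal_def
  by (auto intro: right_ideal_carrier intro!: bexI[where x="\<one>"])

lemma rhom_on_zero:
  assumes "right_ideal R D" "rhom_on R D f"
  shows "f \<zero> = \<zero>"
proof -
  have "\<zero> \<in> D" using right_idealD[OF assms(1)] by auto
  then have "f (\<zero> \<otimes> \<zero>) = f \<zero> \<otimes> \<zero>" "f \<zero> \<in> carrier R"
    using assms(2) unfolding rhom_on_def by (auto simp del: l_zero r_zero l_null r_null)
  then show ?thesis by simp
qed

lemma rhom_on_uminus:
  assumes "right_ideal R D" "rhom_on R D f" "x \<in> D"
  shows "f (\<ominus> x) = \<ominus> f x"
proof -
  have "x \<in> carrier R" using right_idealD(1)[OF assms(1)] assms(3) by auto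
  moreover have "f (x \<otimes> \<ominus> \<one>) = f x \<otimes> \<ominus> \<one>" "f x \<in> carrier R"
    using assms(2,3) unfolding rhom_on_def by auto
  ultimately show ?thesis by (simp add: r_minus)
qed

lemma rhom_on_subset: "rhom_on R D f \<Longrightarrow> D' \<subseteq> D \<Longrightarrow> right_ideal R D' \<Longrightarrow> rhom_on R D' f"
  unfolding rhom_on_def using right_idealD(3,5) by (metis subsetD)

lemma right_ideal_preimage:
  assumes "right_ideal R D" "right_ideal R D'" "rhom_on R D' g"
  shows "right_ideal R {x \<in> D'. g x \<in> D}"
proof (rule right_idealI)
  note A = right_idealD[OF assms(1)] and B = right_idealD[OF assms(2)]
  note G = assms(3)[unfolded rhom_on_def]
  show "{x \<in> D'. g x \<in> D} \<subseteq> carrier R" using B by auto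
  show "\<zero> \<in> {x \<in> D'. g x \<in> D}" using B A rhom_on_zero[OF assms(2,3)] by auto
  show "x \<oplus> y \<in> {x \<in> D'. g x \<in> D}" if "x \<in> {x \<in> D'. g x \<in> D}" "y \<in> {x \<in> D'. g x \<in> D}" for x y
    using that A B G by auto
  show "\<ominus> x \<in> {x \<in> D'. g x \<in> D}" if "x \<in> {x \<in> D'. g x \<in> D}" for x
    using that A B rhom_on_uminus[OF assms(2,3)] by auto
  show "x \<otimes> r \<in> {x \<in> D'. g x \<in> D}" if "x \<in> {x \<in> D'. g x \<in> D}" "r \<in> carrier R" for x r
    using that A B G by auto
qed

lemma dense_right_ideal_preimage:
  assumes "dense_right_ideal R D" "dense_right_ideal R D'" "rhom_on R D' g"
  shows "dense_right_ideal R {x \<in> D'. g x \<in> D}"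
  unfolding dense_right_ideal_def
proof (intro conjI ballI impI)
  show "right_ideal R {x \<in> D'. g x \<in> D}"
    using assms by (intro right_ideal_preimage dense_right_ideal_imp_right_ideal)
  note B = right_idealD[OF dense_right_ideal_imp_right_ideal[OF assms(2)]]
  note G = assms(3)[unfolded rhom_on_def]
  fix r1 r2 assume r: "r1 \<in> carrier R" "r2 \<in> carrier R" "r2 \<noteq> \<zero>"
  obtain s where s: "s \<in> carrier R" "r1 \<otimes> s \<in> D'" "r2 \<otimes> s \<noteq> \<zero>"
    using dense_right_idealD[OF assms(2) r] by blast
  obtain t where t: "t \<in> carrier R" "g (r1 \<otimes> s) \<otimes> t \<in> D" "(r2 \<otimes> s) \<otimes> t \<noteq> \<zero>"
    using dense_right_idealD[OF assms(1), of "g (r1 \<otimes> s)" "r2 \<otimes> s"] s r G by auto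
  have "(r1 \<otimes> s) \<otimes> t \<in> D'" "g ((r1 \<otimes> s) \<otimes> t) = g (r1 \<otimes> s) \<otimes> t"
    using B G s t by auto
  then show "\<exists>r\<in>carrier R. r1 \<otimes> r \<in> {x \<in> D'. g x \<in> D} \<and> r2 \<otimes> r \<noteq> \<zero>"
    using s t r by (intro bexI[where x="s \<otimes> t"]) (auto simp: m_assoc)
qed

lemma dense_right_ideal_Int:
  assumes "dense_right_ideal R A" "dense_right_ideal R B"
  shows "dense_right_ideal R (A \<inter> B)"
proof -
  have "rhom_on R B (\<lambda>x. x)"
    using right_idealD(1)[OF dense_right_ideal_imp_right_ideal[OF assms(2)]]
    unfolding rhom_on_def by auto
  then have "dense_right_ideal R {x \<in> B. x \<in> A}"
    using assms by (intro dense_right_ideal_preimage)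
  moreover have "{x \<in> B. x \<in> A} = A \<inter> B" by blast
  ultimately show ?thesis by simp
qed

end

section \<open>The ring \<open>Q\<^sub>m\<^sub>a\<^sub>x\<close>\<close>

definition radd :: "('a, 'm) ring_scheme \<Rightarrow> 'a set \<times> ('a \<Rightarrow> 'a) \<Rightarrow> 'a set \<times> ('a \<Rightarrow> 'a) \<Rightarrow> 'a set \<times> ('a \<Rightarrow> 'a)" where
  "radd R p q = (fst p \<inter> fst q, \<lambda>x. add R (snd p x) (snd q x))"

definition rmul :: "('a, 'm) ring_scheme \<Rightarrow> 'a set \<times> ('a \<Rightarrow> 'a) \<Rightarrow> 'a set \<times> ('a \<Rightarrow> 'a) \<Rightarrow> 'a set \<times> ('a \<Rightarrow> 'a)" where
  "rmul R p q = ({x \<in> fst q. snd q x \<in> fst p}, \<lambda>x. snd p (snd q x))"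

definition remb :: "('a, 'm) ring_scheme \<Rightarrow> 'a \<Rightarrow> 'a set \<times> ('a \<Rightarrow> 'a)" where
  "remb R r = (carrier R, \<lambda>x. r \<otimes>\<^bsub>R\<^esub> x)"

definition rneg :: "('a, 'm) ring_scheme \<Rightarrow> 'a set \<times> ('a \<Rightarrow> 'a) \<Rightarrow> 'a set \<times> ('a \<Rightarrow> 'a)" where
  "rneg R p = (fst p, \<lambda>x. \<ominus>\<^bsub>R\<^esub> (snd p x))"

context ring
begin

lemma qrepD:
  assumes "qrep R p"
  shows "dense_right_ideal R (fst p)" "right_ideal R (fst p)" "fst p \<subseteq> carrier R"
    "\<And>x. x \<in> fst p \<Longrightarrow> snd p x \<in> carrier R"
    "\<And>x y. x \<in> fst p \<Longrightarrow> y \<in> fst p \<Longrightarrow> snd p (x \<oplus> y) = snd p x \<oplus> snd p y"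
    "\<And>x r. x \<in> fst p \<Longrightarrow> r \<in> carrier R \<Longrightarrow> snd p (x \<otimes> r) = snd p x \<otimes> r"
  using assms dense_right_ideal_imp_right_ideal right_idealD(1) unfolding qrep_def rhom_on_def by blast+

lemma qequiv_refl: "qrep R p \<Longrightarrow> qequiv R p p"
  unfolding qequiv_def qrep_def by auto

lemma qequiv_sym: "qequiv R p q \<Longrightarrow> qequiv R q p"
  unfolding qequiv_def by auto

lemma qequiv_trans: "qequiv R p q \<Longrightarrow> qequiv R q s \<Longrightarrow> qequiv R p s"
  unfolding qequiv_def
proof (elim exE conjE)
  fix D1 D2 assume a: "dense_right_ideal R D1" "D1 \<subseteq> fst p \<inter> fst q" "\<forall>x\<in>D1. snd p x = snd q x"
    "dense_right_ideal R D2" "D2 \<subseteq> fst q \<inter> fst s" "\<forall>x\<in>D2. snd q x = snd s x"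
  show "\<exists>D. dense_right_ideal R D \<and> D \<subseteq> fst p \<inter> fst s \<and> (\<forall>x\<in>D. snd p x = snd s x)"
    using a by (intro exI[where x="D1 \<inter> D2"]) (auto intro: dense_right_ideal_Int)
qed

lemma qequivI:
  "dense_right_ideal R D \<Longrightarrow> D \<subseteq> fst p \<Longrightarrow> D \<subseteq> fst q \<Longrightarrow> (\<And>x. x \<in> D \<Longrightarrow> snd p x = snd q x)
   \<Longrightarrow> qequiv R p q"
  unfolding qequiv_def by blast

lemma qclass_eq: "qequiv R p q \<Longrightarrow> qclass R p = qclass R q"
  unfolding qclass_def using qequiv_sym qequiv_trans by blast

lemma qclass_eqI:
  "dense_right_ideal R D \<Longrightarrow> D \<subseteq> fst p \<Longrightarrow> D \<subseteq> fst q \<Longrightarrow> (\<And>x. x \<in> D \<Longrightarrow> snd p x = snd q x)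
   \<Longrightarrow> qclass R p = qclass R q"
  by (rule qclass_eq, rule qequivI)

lemma qclass_cong:
  "qrep R p \<Longrightarrow> fst q = fst p \<Longrightarrow> (\<And>x. x \<in> fst p \<Longrightarrow> snd p x = snd q x)
   \<Longrightarrow> qclass R p = qclass R q"
  by (rule qclass_eqI[where D="fst p"]) (auto dest: qrepD)

lemma in_qclass: "qrep R p \<Longrightarrow> p \<in> qclass R p"
  unfolding qclass_def using qequiv_refl by blast

lemma qclass_memD: "q \<in> qclass R p \<Longrightarrow> qrep R q \<and> qequiv R p q"
  unfolding qclass_def by blast

lemma qclass_in_Qmax: "qrep R p \<Longrightarrow> qclass R p \<in> Qmax_carrier R"
  unfolding Qmax_carrier_def by blast

lemma Qmax_carrierE:
  assumes "A \<in> Qmax_carrier R"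
  obtains p where "qrep R p" "A = qclass R p"
  using assms unfolding Qmax_carrier_def by blast

lemma qclass_some:
  assumes "qrep R p"
  shows "(SOME q. q \<in> qclass R p) \<in> qclass R p"
  using in_qclass[OF assms] by (rule someI)

lemma qrep_remb: "r \<in> carrier R \<Longrightarrow> qrep R (remb R r)"
  unfolding qrep_def remb_def rhom_on_def
  by (auto simp: dense_right_ideal_carrier r_distr m_assoc)

lemma qrep_radd:
  assumes "qrep R p" "qrep R q"
  shows "qrep R (radd R p q)"
proof -
  note P = qrepD[OF assms(1)] and Q = qrepD[OF assms(2)]
  have "dense_right_ideal R (fst p \<inter> fst q)" using P Q by (intro dense_right_ideal_Int)
  moreover have "rhom_on R (fst p \<inter> fst q) (\<lambda>x. snd p x \<oplus> snd q x)"
    unfolding rhom_on_def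
  proof (intro conjI ballI)
    fix x y assume "x \<in> fst p \<inter> fst q" "y \<in> fst p \<inter> fst q"
    then show "snd p (x \<oplus> y) \<oplus> snd q (x \<oplus> y) = snd p x \<oplus> snd q x \<oplus> (snd p y \<oplus> snd q y)"
      using P Q by (simp add: a_ac)
  next
    fix x r assume "x \<in> fst p \<inter> fst q" "r \<in> carrier R"
    then show "snd p (x \<otimes> r) \<oplus> snd q (x \<otimes> r) = (snd p x \<oplus> snd q x) \<otimes> r"
      using P Q by (simp add: l_distr)
  qed (use P Q in auto)
  ultimately show ?thesis unfolding qrep_def radd_def by simp
qed

lemma qrep_rneg:
  assumes "qrep R p"
  shows "qrep R (rneg R p)"
proof -
  note P = qrepD[OF assms(1)]
  have "rhom_on R (fst p) (\<lambda>x. \<ominus> snd p x)"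
    unfolding rhom_on_def
    using P by (auto simp: minus_add l_minus)
  then show ?thesis using P unfolding qrep_def rneg_def by simp
qed

lemma qrep_rmul:
  assumes "qrep R p" "qrep R q"
  shows "qrep R (rmul R p q)"
proof -
  note P = qrepD[OF assms(1)] and Q = qrepD[OF assms(2)]
  have "dense_right_ideal R {x \<in> fst q. snd q x \<in> fst p}"
    using P Q assms(2) unfolding qrep_def by (intro dense_right_ideal_preimage) auto
  moreover have "rhom_on R {x \<in> fst q. snd q x \<in> fst p} (\<lambda>x. snd p (snd q x))"
    unfolding rhom_on_def using P Q by auto
  ultimately show ?thesis unfolding qrep_def rmul_def by simp
qed

lemma qadd_class:
  assumes "qrep R p" "qrep R q"
  shows "qadd R (qclass R p) (qclass R q) = qclass R (radd R p q)"
proof -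
  define p0 where "p0 = (SOME x. x \<in> qclass R p)"
  define q0 where "q0 = (SOME x. x \<in> qclass R q)"
  have p0: "qrep R p0" "qequiv R p0 p"
    using qclass_memD[OF qclass_some[OF assms(1)]] qequiv_sym unfolding p0_def by auto
  have q0: "qrep R q0" "qequiv R q0 q"
    using qclass_memD[OF qclass_some[OF assms(2)]] qequiv_sym unfolding q0_def by auto
  obtain D1 where D1: "dense_right_ideal R D1" "D1 \<subseteq> fst p0 \<inter> fst p" "\<forall>x\<in>D1. snd p0 x = snd p x"
    using p0 unfolding qequiv_def by blast
  obtain D2 where D2: "dense_right_ideal R D2" "D2 \<subseteq> fst q0 \<inter> fst q" "\<forall>x\<in>D2. snd q0 x = snd q x"
    using q0 unfolding qequiv_def by blast
  have "qadd R (qclass R p) (qclass R q) = qclass R (radd R p0 q0)"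
    unfolding qadd_def p0_def q0_def radd_def Let_def by simp
  also have "\<dots> = qclass R (radd R p q)"
    using D1 D2 by (intro qclass_eqI[where D="D1 \<inter> D2"]) (auto intro: dense_right_ideal_Int simp: radd_def)
  finally show ?thesis .
qed

lemma qmul_class:
  assumes "qrep R p" "qrep R q"
  shows "qmul R (qclass R p) (qclass R q) = qclass R (rmul R p q)"
proof -
  define p0 where "p0 = (SOME x. x \<in> qclass R p)"
  define q0 where "q0 = (SOME x. x \<in> qclass R q)"
  have p0: "qrep R p0" "qequiv R p0 p"
    using qclass_memD[OF qclass_some[OF assms(1)]] qequiv_sym unfolding p0_def by auto
  have q0: "qrep R q0" "qequiv R q0 q"
    using qclass_memD[OF qclass_some[OF assms(2)]] qequiv_sym unfolding q0_def by auto
  obtain D1 where D1: "dense_right_ideal R D1" "D1 \<subseteq> fst p0 \<inter> fst p" "\<forall>x\<in>D1. snd p0 x = snd p x"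
    using p0 unfolding qequiv_def by blast
  obtain D2 where D2: "dense_right_ideal R D2" "D2 \<subseteq> fst q0 \<inter> fst q" "\<forall>x\<in>D2. snd q0 x = snd q x"
    using q0 unfolding qequiv_def by blast
  have rh: "rhom_on R D2 (snd q)"
    using assms(2) D2 unfolding qrep_def by (auto intro: rhom_on_subset dense_right_ideal_imp_right_ideal)
  have dn: "dense_right_ideal R {x \<in> D2. snd q x \<in> D1}"
    using D1 D2 rh by (intro dense_right_ideal_preimage) auto
  have "qmul R (qclass R p) (qclass R q) = qclass R (rmul R p0 q0)"
    unfolding qmul_def p0_def q0_def rmul_def Let_def by simp
  also have "\<dots> = qclass R (rmul R p q)"
    using D1 D2 dn by (intro qclass_eqI[where D="{x \<in> D2. snd q x \<in> D1}"]) (auto simp: rmul_def)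
  finally show ?thesis .
qed

lemma Qmax_simps[simp]: "carrier (Qmax R) = Qmax_carrier R" "add (Qmax R) = qadd R"
  "mult (Qmax R) = qmul R" "zero (Qmax R) = qemb R \<zero>" "one (Qmax R) = qemb R \<one>"
  unfolding Qmax_def by simp_all

lemma qemb_class: "qemb R r = qclass R (remb R r)"
  unfolding qemb_def remb_def by simp

lemma qemb_closed: "r \<in> carrier R \<Longrightarrow> qemb R r \<in> Qmax_carrier R"
  unfolding qemb_class by (intro qclass_in_Qmax qrep_remb)

lemma qadd_closed: "A \<in> Qmax_carrier R \<Longrightarrow> B \<in> Qmax_carrier R \<Longrightarrow> qadd R A B \<in> Qmax_carrier R"
  by (auto elim!: Qmax_carrierE simp: qadd_class intro!: qclass_in_Qmax qrep_radd)

lemma qmul_closed: "A \<in> Qmax_carrier R \<Longrightarrow> B \<in> Qmax_carrier R \<Longrightarrow> qmul R A B \<in> Qmax_carrier R"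
  by (auto elim!: Qmax_carrierE simp: qmul_class intro!: qclass_in_Qmax qrep_rmul)

lemma qadd_assoc:
  assumes "A \<in> Qmax_carrier R" "B \<in> Qmax_carrier R" "C \<in> Qmax_carrier R"
  shows "qadd R (qadd R A B) C = qadd R A (qadd R B C)"
proof -
  obtain p q s where pqs: "qrep R p" "qrep R q" "qrep R s" "A = qclass R p" "B = qclass R q" "C = qclass R s"
    using assms by (meson Qmax_carrierE)
  note P = qrepD[OF pqs(1)] and Q = qrepD[OF pqs(2)] and S = qrepD[OF pqs(3)]
  have "qclass R (radd R (radd R p q) s) = qclass R (radd R p (radd R q s))"
    by (rule qclass_cong[OF qrep_radd[OF qrep_radd[OF pqs(1,2)] pqs(3)]])
       (use P Q S in \<open>auto simp: radd_def a_assoc\<close>)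
  then show ?thesis using pqs by (simp add: qadd_class qrep_radd)
qed

lemma qadd_comm:
  assumes "A \<in> Qmax_carrier R" "B \<in> Qmax_carrier R"
  shows "qadd R A B = qadd R B A"
proof -
  obtain p q where pqs: "qrep R p" "qrep R q" "A = qclass R p" "B = qclass R q"
    using assms by (meson Qmax_carrierE)
  note P = qrepD[OF pqs(1)] and Q = qrepD[OF pqs(2)]
  have "qclass R (radd R p q) = qclass R (radd R q p)"
    by (rule qclass_cong[OF qrep_radd[OF pqs(1,2)]])
       (use P Q in \<open>auto simp: radd_def a_comm\<close>)
  then show ?thesis using pqs by (simp add: qadd_class)
qed

lemma qadd_zero_left:
  assumes "A \<in> Qmax_carrier R"
  shows "qadd R (qemb R \<zero>) A = A"
proof -
  obtain p where pqs: "qrep R p" "A = qclass R p"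
    using assms by (meson Qmax_carrierE)
  note P = qrepD[OF pqs(1)]
  have e: "qclass R p = qclass R (radd R (remb R \<zero>) p)"
    by (rule qclass_cong[OF pqs(1)]) (use P in \<open>auto simp: radd_def remb_def\<close>)
  show ?thesis
    unfolding pqs(2) qemb_class qadd_class[OF qrep_remb[OF zero_closed] pqs(1)] e[symmetric] ..
qed

lemma qadd_inverse_ex:
  assumes "A \<in> Qmax_carrier R"
  shows "\<exists>B\<in>Qmax_carrier R. qadd R B A = qemb R \<zero>"
proof -
  obtain p where pqs: "qrep R p" "A = qclass R p"
    using assms by (meson Qmax_carrierE)
  note P = qrepD[OF pqs(1)]
  have "qclass R (radd R (rneg R p) p) = qclass R (remb R \<zero>)"
    by (rule qclass_eqI[where D="fst p"]) (use P in \<open>auto simp: radd_def remb_def rneg_def l_neg\<close>)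
  then have "qadd R (qclass R (rneg R p)) A = qemb R \<zero>"
    using pqs by (simp add: qadd_class qrep_rneg qemb_class)
  then show ?thesis using qclass_in_Qmax[OF qrep_rneg[OF pqs(1)]] by blast
qed

lemma qmul_assoc:
  assumes "A \<in> Qmax_carrier R" "B \<in> Qmax_carrier R" "C \<in> Qmax_carrier R"
  shows "qmul R (qmul R A B) C = qmul R A (qmul R B C)"
proof -
  obtain p q s where pqs: "qrep R p" "qrep R q" "qrep R s" "A = qclass R p" "B = qclass R q" "C = qclass R s"
    using assms by (meson Qmax_carrierE)
  have "rmul R (rmul R p q) s = rmul R p (rmul R q s)"
    unfolding rmul_def by auto
  then show ?thesis using pqs by (simp add: qmul_class qrep_rmul)
qed

lemma qmul_one_left:
  assumes "A \<in> Qmax_carrier R"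
  shows "qmul R (qemb R \<one>) A = A"
proof -
  obtain p where pqs: "qrep R p" "A = qclass R p"
    using assms by (meson Qmax_carrierE)
  note P = qrepD[OF pqs(1)]
  have e: "qclass R p = qclass R (rmul R (remb R \<one>) p)"
    by (rule qclass_cong[OF pqs(1)]) (use P in \<open>auto simp: rmul_def remb_def\<close>)
  show ?thesis
    unfolding pqs(2) qemb_class qmul_class[OF qrep_remb[OF one_closed] pqs(1)] e[symmetric] ..
qed

lemma qmul_one_right:
  assumes "A \<in> Qmax_carrier R"
  shows "qmul R A (qemb R \<one>) = A"
proof -
  obtain p where pqs: "qrep R p" "A = qclass R p"
    using assms by (meson Qmax_carrierE)
  note P = qrepD[OF pqs(1)]
  have e: "qclass R p = qclass R (rmul R p (remb R \<one>))"
    by (rule qclass_cong[OF pqs(1)]) (use P in \<open>auto simp: rmul_def remb_def\<close>)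
  show ?thesis
    unfolding pqs(2) qemb_class qmul_class[OF pqs(1) qrep_remb[OF one_closed]] e[symmetric] ..
qed

lemma qmul_l_distr:
  assumes "A \<in> Qmax_carrier R" "B \<in> Qmax_carrier R" "C \<in> Qmax_carrier R"
  shows "qmul R (qadd R A B) C = qadd R (qmul R A C) (qmul R B C)"
proof -
  obtain p q s where pqs: "qrep R p" "qrep R q" "qrep R s" "A = qclass R p" "B = qclass R q" "C = qclass R s"
    using assms by (meson Qmax_carrierE)
  have "rmul R (radd R p q) s = radd R (rmul R p s) (rmul R q s)"
    unfolding rmul_def radd_def by auto
  then show ?thesis using pqs by (simp add: qadd_class qmul_class qrep_radd qrep_rmul)
qed

lemma qmul_r_distr:
  assumes "A \<in> Qmax_carrier R" "B \<in> Qmax_carrier R" "C \<in> Qmax_carrier R"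
  shows "qmul R C (qadd R A B) = qadd R (qmul R C A) (qmul R C B)"
proof -
  obtain p q s where pqs: "qrep R p" "qrep R q" "qrep R s" "A = qclass R p" "B = qclass R q" "C = qclass R s"
    using assms by (meson Qmax_carrierE)
  note P = qrepD[OF pqs(1)] and Q = qrepD[OF pqs(2)] and S = qrepD[OF pqs(3)]
  have d: "dense_right_ideal R (fst (radd R (rmul R s p) (rmul R s q)))"
    using qrepD(1)[OF qrep_radd[OF qrep_rmul qrep_rmul]] pqs by blast
  have "qclass R (rmul R s (radd R p q)) = qclass R (radd R (rmul R s p) (rmul R s q))"
  proof (rule qclass_eqI[OF d])
    show "fst (radd R (rmul R s p) (rmul R s q)) \<subseteq> fst (rmul R s (radd R p q))"
      using right_idealD(3)[OF S(2)] unfolding radd_def rmul_def by auto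
    show "fst (radd R (rmul R s p) (rmul R s q)) \<subseteq> fst (radd R (rmul R s p) (rmul R s q))" by simp
    fix x assume "x \<in> fst (radd R (rmul R s p) (rmul R s q))"
    then have x: "x \<in> fst p" "x \<in> fst q" "snd p x \<in> fst s" "snd q x \<in> fst s"
      unfolding radd_def rmul_def by auto
    show "snd (rmul R s (radd R p q)) x = snd (radd R (rmul R s p) (rmul R s q)) x"
      unfolding radd_def rmul_def using S(5)[OF x(3,4)] by simp
  qed
  then show ?thesis unfolding pqs(4-6) qadd_class[OF pqs(1,2)] qmul_class[OF pqs(3) qrep_radd[OF pqs(1,2)]]
    qmul_class[OF pqs(3,1)] qmul_class[OF pqs(3,2)] qadd_class[OF qrep_rmul[OF pqs(3,1)] qrep_rmul[OF pqs(3,2)]] .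
qed

lemma Qmax_ring: "ring (Qmax R)"
proof (rule ringI)
  show "abelian_group (Qmax R)"
    apply (rule abelian_groupI)
    unfolding Qmax_simps
         apply (erule (1) qadd_closed)
        apply (rule qemb_closed, rule zero_closed)
       apply (erule (2) qadd_assoc)
      apply (erule (1) qadd_comm)
     apply (erule qadd_zero_left)
    apply (erule qadd_inverse_ex)
    done
  show "monoid (Qmax R)"
    apply (rule monoidI)
    unfolding Qmax_simps
        apply (erule (1) qmul_closed)
       apply (rule qemb_closed, rule one_closed)
      apply (erule (2) qmul_assoc)
     apply (erule qmul_one_left)
    apply (erule qmul_one_right)
    done
qed (unfold Qmax_simps, erule (2) qmul_l_distr, erule (2) qmul_r_distr)

lemma qemb_add: "a \<in> carrier R \<Longrightarrow> b \<in> carrier R \<Longrightarrow> qemb R (a \<oplus> b) = qadd R (qemb R a) (qemb R b)"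
  unfolding qemb_class qadd_class[OF qrep_remb qrep_remb]
  by (rule qclass_cong[OF qrep_remb]) (auto simp: remb_def radd_def l_distr)

lemma qemb_mult: "a \<in> carrier R \<Longrightarrow> b \<in> carrier R \<Longrightarrow> qemb R (a \<otimes> b) = qmul R (qemb R a) (qemb R b)"
  unfolding qemb_class qmul_class[OF qrep_remb qrep_remb]
  by (rule qclass_cong[OF qrep_remb]) (auto simp: remb_def rmul_def m_assoc)

lemma ring_hom_ring_qemb: "ring_hom_ring R (Qmax R) (qemb R)"
  by (rule ring_hom_ringI[OF ring_axioms Qmax_ring]) (simp_all add: qemb_closed qemb_add qemb_mult)

lemma qneg_class:
  assumes "qrep R p"
  shows "\<ominus>\<^bsub>Qmax R\<^esub> qclass R p = qclass R (rneg R p)"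
proof -
  interpret Q: ring "Qmax R" by (rule Qmax_ring)
  note P = qrepD[OF assms]
  have "qclass R (radd R (rneg R p) p) = qclass R (remb R \<zero>)"
    by (rule qclass_eqI[where D="fst p"]) (use P in \<open>auto simp: radd_def remb_def rneg_def l_neg\<close>)
  then have "qadd R (qclass R (rneg R p)) (qclass R p) = qemb R \<zero>"
    using assms by (simp add: qadd_class qrep_rneg qemb_class)
  then show ?thesis
    using Q.minus_equality[of "qclass R (rneg R p)" "qclass R p"] qclass_in_Qmax assms qrep_rneg by simp
qed

lemma Qmax_carrier_memD:
  assumes "A \<in> Qmax_carrier R" "p \<in> A"
  shows "qrep R p" "A = qclass R p"
proof -
  obtain p0 where "qrep R p0" "A = qclass R p0" using assms(1) by (rule Qmax_carrierE)
  then show "qrep R p" "A = qclass R p" using qclass_memD[of p p0] assms(2) qclass_eq by auto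
qed

end

section \<open>Extension of right ideals to overrings of \<open>R\<close> in \<open>Q\<^sub>m\<^sub>a\<^sub>x\<close>\<close>

definition qterm :: "('a, 'm) ring_scheme \<Rightarrow> 'a \<times> ('a set \<times> ('a \<Rightarrow> 'a)) set \<Rightarrow> ('a set \<times> ('a \<Rightarrow> 'a)) set" where
  "qterm R = (\<lambda>(i, q). qmul R (qemb R i) q)"

lemma ideal_ext_qterm: "ideal_ext R I Q = {qsum R (map (qterm R) xs) | xs. set xs \<subseteq> I \<times> Q}"
  unfolding ideal_ext_def qterm_def by simp

lemma ideal_extI: "set xs \<subseteq> I \<times> Q \<Longrightarrow> qsum R (map (qterm R) xs) \<in> ideal_ext R I Q"
  unfolding ideal_ext_qterm by blast

lemma ideal_extE:
  assumes "y \<in> ideal_ext R I Q"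
  obtains xs where "set xs \<subseteq> I \<times> Q" "y = qsum R (map (qterm R) xs)"
  using assms unfolding ideal_ext_qterm by blast

context ring
begin

definition overring :: "('a set \<times> ('a \<Rightarrow> 'a)) set set \<Rightarrow> bool" where
  "overring S \<longleftrightarrow> subring S (Qmax R) \<and> qemb R ` carrier R \<subseteq> S"

lemma overringD:
  assumes "overring S"
  shows "S \<subseteq> Qmax_carrier R" "\<And>r. r \<in> carrier R \<Longrightarrow> qemb R r \<in> S"
    "\<And>a b. a \<in> S \<Longrightarrow> b \<in> S \<Longrightarrow> qadd R a b \<in> S"
    "\<And>a b. a \<in> S \<Longrightarrow> b \<in> S \<Longrightarrow> qmul R a b \<in> S"
    "\<And>a. a \<in> S \<Longrightarrow> \<ominus>\<^bsub>Qmax R\<^esub> a \<in> S"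
    "subring S (Qmax R)"
  using assms subringE[of S "Qmax R"] unfolding overring_def by auto

lemma qterm_closed: "i \<in> carrier R \<Longrightarrow> q \<in> Qmax_carrier R \<Longrightarrow> qterm R (i, q) \<in> Qmax_carrier R"
  unfolding qterm_def by (simp add: qmul_closed qemb_closed)

lemma qterm_map_closed:
  "set xs \<subseteq> carrier R \<times> Qmax_carrier R \<Longrightarrow> set (map (qterm R) xs) \<subseteq> Qmax_carrier R"
  using qterm_closed by auto

lemma qsum_Nil [simp]: "qsum R [] = qemb R \<zero>"
  unfolding qsum_def by simp

lemma qsum_Cons [simp]: "qsum R (x # xs) = qadd R x (qsum R xs)"
  unfolding qsum_def by simp

lemma qsum_closed: "set xs \<subseteq> Qmax_carrier R \<Longrightarrow> qsum R xs \<in> Qmax_carrier R"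
  by (induction xs) (auto simp: qemb_closed qadd_closed)

lemma qsum_append:
  "set xs \<subseteq> Qmax_carrier R \<Longrightarrow> set ys \<subseteq> Qmax_carrier R \<Longrightarrow>
   qsum R (xs @ ys) = qadd R (qsum R xs) (qsum R ys)"
  by (induction xs) (auto simp: qadd_zero_left qsum_closed qadd_assoc)

lemma qsum_uminus:
  "set xs \<subseteq> Qmax_carrier R \<Longrightarrow> qsum R (map (a_inv (Qmax R)) xs) = \<ominus>\<^bsub>Qmax R\<^esub> qsum R xs"
proof (induction xs)
  interpret Q: ring "Qmax R" by (rule Qmax_ring)
  case Nil
  show ?case using Q.minus_zero by simp
next
  interpret Q: ring "Qmax R" by (rule Qmax_ring)
  case (Cons x xs)
  show ?case using Cons Q.minus_add[of x "qsum R xs"] qsum_closed by simp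
qed

lemma qsum_mult_right:
  "set xs \<subseteq> Qmax_carrier R \<Longrightarrow> s \<in> Qmax_carrier R \<Longrightarrow>
   qmul R (qsum R xs) s = qsum R (map (\<lambda>y. qmul R y s) xs)"
proof (induction xs)
  interpret Q: ring "Qmax R" by (rule Qmax_ring)
  case Nil
  show ?case using Q.l_null[of s] Nil by simp
next
  case (Cons x xs)
  show ?case using Cons qmul_l_distr qsum_closed by simp
qed

lemma qsum_mult_left:
  "set xs \<subseteq> Qmax_carrier R \<Longrightarrow> s \<in> Qmax_carrier R \<Longrightarrow>
   qmul R s (qsum R xs) = qsum R (map (qmul R s) xs)"
proof (induction xs)
  interpret Q: ring "Qmax R" by (rule Qmax_ring)
  case Nil
  show ?case using Q.r_null[of s] Nil by simp
next
  case (Cons x xs)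
  show ?case using Cons qmul_r_distr qsum_closed by simp
qed

lemma qsum_in_subring: "subring S (Qmax R) \<Longrightarrow> set xs \<subseteq> S \<Longrightarrow> qsum R xs \<in> S"
  by (induction xs) (use subringE[of S "Qmax R"] in auto)

lemma qsum_qterm_uminus:
  assumes "set xs \<subseteq> carrier R \<times> Qmax_carrier R"
  shows "qsum R (map (qterm R) (map (\<lambda>(i, q). (i, \<ominus>\<^bsub>Qmax R\<^esub> q)) xs))
    = \<ominus>\<^bsub>Qmax R\<^esub> qsum R (map (qterm R) xs)"
proof -
  interpret Q: ring "Qmax R" by (rule Qmax_ring)
  have "map (qterm R) (map (\<lambda>(i, q). (i, \<ominus>\<^bsub>Qmax R\<^esub> q)) xs) = map (a_inv (Qmax R)) (map (qterm R) xs)"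
    using assms Q.r_minus qemb_closed by (auto simp: qterm_def)
  then show ?thesis using qsum_uminus[OF qterm_map_closed[OF assms]] by (simp only:)
qed

lemma qsum_qterm_mult_right:
  assumes "set xs \<subseteq> carrier R \<times> Qmax_carrier R" "s \<in> Qmax_carrier R"
  shows "qsum R (map (qterm R) (map (\<lambda>(i, q). (i, qmul R q s)) xs))
    = qmul R (qsum R (map (qterm R) xs)) s"
proof -
  have "map (qterm R) (map (\<lambda>(i, q). (i, qmul R q s)) xs) = map (\<lambda>y. qmul R y s) (map (qterm R) xs)"
    using assms qmul_assoc qemb_closed by (auto simp: qterm_def)
  then show ?thesis using qsum_mult_right[OF qterm_map_closed[OF assms(1)] assms(2)] by (simp only:)
qed

lemma ideal_ext_subset:
  assumes "overring S" "I \<subseteq> carrier R"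
  shows "ideal_ext R I S \<subseteq> S"
proof
  fix y assume "y \<in> ideal_ext R I S"
  then obtain xs where xs: "set xs \<subseteq> I \<times> S" "y = qsum R (map (qterm R) xs)" by (rule ideal_extE)
  have "set (map (qterm R) xs) \<subseteq> S"
  proof
    fix z assume "z \<in> set (map (qterm R) xs)"
    then obtain i q where iq: "(i, q) \<in> set xs" "z = qterm R (i, q)" by auto
    then have "i \<in> carrier R" "q \<in> S" using xs(1) assms(2) by auto
    then show "z \<in> S" using iq(2) overringD(2,4)[OF assms(1)] by (simp add: qterm_def)
  qed
  then show "y \<in> S" using xs(2) qsum_in_subring overringD(6)[OF assms(1)] by simp
qed

lemma ideal_ext_zero: "qemb R \<zero> \<in> ideal_ext R I S"
  using ideal_extI[of "[]" I S R] by simp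

lemma qemb_mult_in_ideal_ext:
  assumes "overring S" "i \<in> I" "I \<subseteq> carrier R" "s \<in> S"
  shows "qmul R (qemb R i) s \<in> ideal_ext R I S"
proof -
  interpret Q: ring "Qmax R" by (rule Qmax_ring)
  have "qterm R (i, s) \<in> Qmax_carrier R"
    using assms overringD(1)[OF assms(1)] by (intro qterm_closed) auto
  then have "qsum R (map (qterm R) [(i, s)]) = qmul R (qemb R i) s"
    using Q.r_zero by (simp add: qterm_def)
  then show ?thesis using ideal_extI[of "[(i, s)]" I S R] assms by simp
qed

lemma ideal_ext_add:
  assumes "overring S" "I \<subseteq> carrier R" "a \<in> ideal_ext R I S" "b \<in> ideal_ext R I S"
  shows "qadd R a b \<in> ideal_ext R I S"
proof -
  obtain xs where xs: "set xs \<subseteq> I \<times> S" "a = qsum R (map (qterm R) xs)"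
    using assms(3) by (rule ideal_extE)
  obtain ys where ys: "set ys \<subseteq> I \<times> S" "b = qsum R (map (qterm R) ys)"
    using assms(4) by (rule ideal_extE)
  have "set xs \<subseteq> carrier R \<times> Qmax_carrier R" "set ys \<subseteq> carrier R \<times> Qmax_carrier R"
    using xs(1) ys(1) assms(2) overringD(1)[OF assms(1)] by auto
  then have "qadd R a b = qsum R (map (qterm R) (xs @ ys))"
    using xs(2) ys(2) qterm_map_closed qsum_append by simp
  then show ?thesis using ideal_extI[of "xs @ ys" I S R] xs ys by simp
qed

lemma ideal_ext_uminus:
  assumes "overring S" "I \<subseteq> carrier R" "a \<in> ideal_ext R I S"
  shows "\<ominus>\<^bsub>Qmax R\<^esub> a \<in> ideal_ext R I S"
proof -
  obtain xs where xs: "set xs \<subseteq> I \<times> S" "a = qsum R (map (qterm R) xs)"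
    using assms(3) by (rule ideal_extE)
  have "set (map (\<lambda>(i, q). (i, \<ominus>\<^bsub>Qmax R\<^esub> q)) xs) \<subseteq> I \<times> S"
    using xs(1) overringD(5)[OF assms(1)] by auto
  moreover have "set xs \<subseteq> carrier R \<times> Qmax_carrier R"
    using xs(1) assms(2) overringD(1)[OF assms(1)] by auto
  ultimately show ?thesis
    using ideal_extI qsum_qterm_uminus xs(2) by metis
qed

lemma ideal_ext_mult_right:
  assumes "overring S" "I \<subseteq> carrier R" "a \<in> ideal_ext R I S" "s \<in> S"
  shows "qmul R a s \<in> ideal_ext R I S"
proof -
  obtain xs where xs: "set xs \<subseteq> I \<times> S" "a = qsum R (map (qterm R) xs)"
    using assms(3) by (rule ideal_extE)
  have "set (map (\<lambda>(i, q). (i, qmul R q s)) xs) \<subseteq> I \<times> S"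
    using xs(1) overringD(4)[OF assms(1)] assms(4) by auto
  moreover have "set xs \<subseteq> carrier R \<times> Qmax_carrier R" "s \<in> Qmax_carrier R"
    using xs(1) assms(2,4) overringD(1)[OF assms(1)] by auto
  ultimately show ?thesis
    using ideal_extI qsum_qterm_mult_right xs(2) by metis
qed

lemma ideal_ext_qsum:
  assumes "overring S" "I \<subseteq> carrier R" "set xs \<subseteq> ideal_ext R I S"
  shows "qsum R xs \<in> ideal_ext R I S"
  using assms(3) by (induction xs) (auto intro: ideal_ext_zero ideal_ext_add[OF assms(1,2)])

lemma ideal_ext_mult_left:
  assumes S: "overring S" and I: "I \<subseteq> carrier R" and K: "K \<subseteq> carrier R" and d: "d \<in> carrier R"
    and dI: "\<And>i. i \<in> I \<Longrightarrow> d \<otimes> i \<in> K" and y: "y \<in> ideal_ext R I S"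
  shows "qmul R (qemb R d) y \<in> ideal_ext R K S"
proof -
  obtain xs where xs: "set xs \<subseteq> I \<times> S" "y = qsum R (map (qterm R) xs)"
    using y by (rule ideal_extE)
  have xs_carrier: "set xs \<subseteq> carrier R \<times> Qmax_carrier R"
    using xs(1) I overringD(1)[OF S] by auto
  have "qmul R (qemb R d) y = qsum R (map (qmul R (qemb R d)) (map (qterm R) xs))"
    unfolding xs(2) by (rule qsum_mult_left[OF qterm_map_closed[OF xs_carrier] qemb_closed[OF d]])
  also have "\<dots> \<in> ideal_ext R K S"
  proof (rule ideal_ext_qsum[OF S K], rule subsetI)
    fix w assume "w \<in> set (map (qmul R (qemb R d)) (map (qterm R) xs))"
    then obtain i q where iq: "(i, q) \<in> set xs" "w = qmul R (qemb R d) (qterm R (i, q))" by auto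
    then have "i \<in> carrier R" "q \<in> Qmax_carrier R" using xs_carrier by auto
    then have "w = qmul R (qemb R (d \<otimes> i)) q"
      using iq(2) qmul_assoc qemb_closed d by (simp add: qterm_def qemb_mult)
    then show "w \<in> ideal_ext R K S"
      using qemb_mult_in_ideal_ext[OF S dI K] iq(1) xs(1) by auto
  qed
  finally show ?thesis .
qed

lemma ideal_ext_eq_if_one:
  assumes "overring S" "I \<subseteq> carrier R" "qemb R \<one> \<in> ideal_ext R I S"
  shows "ideal_ext R I S = S"
proof
  show "ideal_ext R I S \<subseteq> S" using ideal_ext_subset assms by blast
  show "S \<subseteq> ideal_ext R I S"
  proof
    fix s assume "s \<in> S"
    then have "qmul R (qemb R \<one>) s = s" using qmul_one_left overringD(1)[OF assms(1)] by auto
    then show "s \<in> ideal_ext R I S" using ideal_ext_mult_right[OF assms \<open>s \<in> S\<close>] by simp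
  qed
qed

lemma ideal_ext_carrier:
  assumes S: "overring S"
  shows "ideal_ext R (carrier R) S = S"
proof (rule ideal_ext_eq_if_one[OF S subset_refl])
  have "qmul R (qemb R \<one>) (qemb R \<one>) \<in> ideal_ext R (carrier R) S"
    by (rule qemb_mult_in_ideal_ext[OF S one_closed subset_refl overringD(2)[OF S one_closed]])
  then show "qemb R \<one> \<in> ideal_ext R (carrier R) S"
    using qmul_one_right[OF qemb_closed[OF one_closed]] by simp
qed

lemma ideal_ext_minus:
  assumes "overring S" "I \<subseteq> carrier R" "a \<in> ideal_ext R I S" "b \<in> ideal_ext R I S"
  shows "a \<ominus>\<^bsub>Qmax R\<^esub> b \<in> ideal_ext R I S"
  unfolding a_minus_def using assms by (simp add: ideal_ext_add ideal_ext_uminus)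

end

section \<open>Integer combinations and the defining relations of \<open>I \<otimes>\<^sub>R S\<close>\<close>

definition lincomb :: "('g, 'n) ring_scheme \<Rightarrow> ('p \<Rightarrow> 'g) \<Rightarrow> 'p set \<Rightarrow> ('p \<Rightarrow> int) \<Rightarrow> 'g" where
  "lincomb G \<phi> T v = finsum G (\<lambda>p. add_pow G (v p) (\<phi> p)) T"

lemma sum_list_fdelta_notin: "p \<notin> set xs \<Longrightarrow> (\<Sum>x\<leftarrow>xs. fdelta x p) = 0"
  by (induction xs) (auto simp: fdelta_def)

lemma tensor_rel_finite_support:
  "u \<in> tensor_rel R I S \<Longrightarrow> finite {p. u p \<noteq> 0}"
proof (induction rule: tensor_rel.induct)
  case (diff u v)
  have "{p. u p - v p \<noteq> 0} \<subseteq> {p. u p \<noteq> 0} \<union> {p. v p \<noteq> 0}" by auto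
  then show ?case using diff.IH by (auto intro: finite_subset)
qed (auto intro: finite_subset[of _ "{_, _, _}"] simp: fdelta_def)

context abelian_group
begin

lemma add_pow_int_zero [simp]: "add_pow G (0::int) x = \<zero>"
  by (simp add: add_pow_def)

lemma lincomb_closed: "\<phi> \<in> UNIV \<rightarrow> carrier G \<Longrightarrow> lincomb G \<phi> T v \<in> carrier G"
  unfolding lincomb_def by (intro finsum_closed) (auto simp: add.int_pow_closed)

lemma lincomb_zero: "lincomb G \<phi> T (\<lambda>p. 0) = \<zero>"
  unfolding lincomb_def by simp

lemma lincomb_add:
  assumes "\<phi> \<in> UNIV \<rightarrow> carrier G"
  shows "lincomb G \<phi> T (\<lambda>p. v p + w p) = lincomb G \<phi> T v \<oplus> lincomb G \<phi> T w"
proof -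
  have "lincomb G \<phi> T (\<lambda>p. v p + w p)
      = finsum G (\<lambda>p. add_pow G (v p) (\<phi> p) \<oplus> add_pow G (w p) (\<phi> p)) T"
    unfolding lincomb_def using assms
    by (intro finsum_cong') (auto simp: add.int_pow_mult[OF funcset_mem[OF assms UNIV_I]])
  also have "\<dots> = lincomb G \<phi> T v \<oplus> lincomb G \<phi> T w"
    unfolding lincomb_def using assms by (intro finsum_addf) auto
  finally show ?thesis .
qed

lemma lincomb_diff:
  assumes "\<phi> \<in> UNIV \<rightarrow> carrier G"
  shows "lincomb G \<phi> T (\<lambda>p. v p - w p) = lincomb G \<phi> T v \<ominus> lincomb G \<phi> T w"
proof -
  have "lincomb G \<phi> T (\<lambda>p. - w p) \<oplus> lincomb G \<phi> T w = \<zero>"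
    using lincomb_add[OF assms, of T "\<lambda>p. - w p" w, symmetric] lincomb_zero by simp
  then have "lincomb G \<phi> T (\<lambda>p. - w p) = \<ominus> lincomb G \<phi> T w"
    using minus_equality lincomb_closed[OF assms] by metis
  then show ?thesis
    using lincomb_add[OF assms, of T v "\<lambda>p. - w p"] by (simp add: a_minus_def)
qed

lemma lincomb_fdelta:
  assumes "\<phi> \<in> UNIV \<rightarrow> carrier G" "finite T" "a \<in> T"
  shows "lincomb G \<phi> T (fdelta a) = \<phi> a"
proof -
  have "lincomb G \<phi> T (fdelta a) = finsum G (\<lambda>j. if a = j then \<phi> j else \<zero>) T"
    unfolding lincomb_def using assms
    by (intro finsum_cong')
      (auto simp: fdelta_def add.int_pow_1[OF funcset_mem[OF assms(1) UNIV_I]])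
  also have "\<dots> = \<phi> a" using add.finprod_singleton[of a T \<phi>] assms by auto
  finally show ?thesis .
qed

lemma lincomb_Un_support:
  assumes "\<phi> \<in> UNIV \<rightarrow> carrier G" "finite T" "finite X" "{p. v p \<noteq> 0} \<subseteq> T"
  shows "lincomb G \<phi> (T \<union> X) v = lincomb G \<phi> T v"
proof -
  have zero: "v p = 0" if "p \<notin> T" for p using assms(4) that by blast
  show ?thesis
    unfolding lincomb_def by (rule add.finprod_mono_neutral_cong_right) (use assms zero in auto)
qed

lemma lincomb_fdelta_diff2:
  assumes "\<phi> \<in> UNIV \<rightarrow> carrier G" "finite T" "{p. fdelta a p - fdelta b p \<noteq> 0} \<subseteq> T"
  shows "lincomb G \<phi> T (\<lambda>p. fdelta a p - fdelta b p) = \<phi> a \<ominus> \<phi> b"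
  using lincomb_Un_support[OF assms(1,2) _ assms(3), of "{a, b}", symmetric] assms(2)
  by (simp add: lincomb_diff[OF assms(1)] lincomb_fdelta[OF assms(1)])

lemma lincomb_fdelta_diff3:
  assumes "\<phi> \<in> UNIV \<rightarrow> carrier G" "finite T" "{p. fdelta a p - fdelta b p - fdelta c p \<noteq> 0} \<subseteq> T"
  shows "lincomb G \<phi> T (\<lambda>p. fdelta a p - fdelta b p - fdelta c p) = \<phi> a \<ominus> \<phi> b \<ominus> \<phi> c"
  using lincomb_Un_support[OF assms(1,2) _ assms(3), of "{a, b, c}", symmetric] assms(2)
  by (simp add: lincomb_diff[OF assms(1)] lincomb_fdelta[OF assms(1)])

lemma lincomb_sum_list_fdelta:
  assumes "\<phi> \<in> UNIV \<rightarrow> carrier G" "finite T" "set xs \<subseteq> T"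
  shows "lincomb G \<phi> T (\<lambda>p. \<Sum>x\<leftarrow>xs. fdelta x p) = foldr (add G) (map \<phi> xs) \<zero>"
  using assms(3)
proof (induction xs)
  case Nil
  then show ?case using lincomb_zero by simp
next
  case (Cons y ys)
  have "lincomb G \<phi> T (\<lambda>p. \<Sum>x\<leftarrow>y # ys. fdelta x p)
      = lincomb G \<phi> T (fdelta y) \<oplus> lincomb G \<phi> T (\<lambda>p. \<Sum>x\<leftarrow>ys. fdelta x p)"
    using lincomb_add[OF assms(1)] by simp
  then show ?case using Cons lincomb_fdelta[OF assms(1,2)] by simp
qed

lemma lincomb_tensor_rel_in_subgroup:
  fixes R :: "('r, 'n) ring_scheme"
  assumes \<phi>: "\<phi> \<in> UNIV \<rightarrow> carrier G"
    and M: "\<zero> \<in> M" "\<And>x y. x \<in> M \<Longrightarrow> y \<in> M \<Longrightarrow> x \<ominus> y \<in> M"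
    and rel_add_l: "\<And>i i' s. i \<in> I \<Longrightarrow> i' \<in> I \<Longrightarrow> s \<in> S \<Longrightarrow>
      \<phi> (add R i i', s) \<ominus> \<phi> (i, s) \<ominus> \<phi> (i', s) \<in> M"
    and rel_add_r: "\<And>i s s'. i \<in> I \<Longrightarrow> s \<in> S \<Longrightarrow> s' \<in> S \<Longrightarrow>
      \<phi> (i, qadd R s s') \<ominus> \<phi> (i, s) \<ominus> \<phi> (i, s') \<in> M"
    and rel_balanced: "\<And>i r s. i \<in> I \<Longrightarrow> r \<in> carrier R \<Longrightarrow> s \<in> S \<Longrightarrow>
      \<phi> (mult R i r, s) \<ominus> \<phi> (i, qmul R (qemb R r) s) \<in> M"
    and u: "u \<in> tensor_rel R I S" and T: "finite T" "{p. u p \<noteq> 0} \<subseteq> T"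
  shows "lincomb G \<phi> T u \<in> M"
  using u T
proof (induction arbitrary: T rule: tensor_rel.induct)
  case zero
  show ?case using M(1) by (simp only: lincomb_zero)
next
  case (add_l i i' s)
  then show ?case using rel_add_l lincomb_fdelta_diff3[OF \<phi>] by simp
next
  case (add_r i s s')
  then show ?case using rel_add_r lincomb_fdelta_diff3[OF \<phi>] by simp
next
  case (balanced i r s)
  then show ?case using rel_balanced lincomb_fdelta_diff2[OF \<phi>] by simp
next
  case (diff u v)
  define T' where "T' = T \<union> ({p. u p \<noteq> 0} \<union> {p. v p \<noteq> 0})"
  have fin: "finite ({p. u p \<noteq> 0} \<union> {p. v p \<noteq> 0})"
    using tensor_rel_finite_support diff.hyps by blast
  have "finite T'" using fin diff.prems(1) unfolding T'_def by simp
  then have IH: "lincomb G \<phi> T' u \<in> M" "lincomb G \<phi> T' v \<in> M"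
    by (intro diff.IH; auto simp: T'_def)+
  have "lincomb G \<phi> T (\<lambda>p. u p - v p) = lincomb G \<phi> T' (\<lambda>p. u p - v p)"
    unfolding T'_def by (rule lincomb_Un_support[OF \<phi> diff.prems(1) fin diff.prems(2), symmetric])
  also have "\<dots> = lincomb G \<phi> T' u \<ominus> lincomb G \<phi> T' v"
    by (rule lincomb_diff[OF \<phi>])
  also have "\<dots> \<in> M" using M(2)[OF IH] .
  finally show ?case .
qed

end

section \<open>Flatness and colon ideals\<close>

text \<open>
  Let \<open>D S = S\<close>, \<open>r \<in> R\<close> and \<open>I = r R + D\<close>. Every \<open>i \<in> I\<close> has a lift \<open>a(i) \<in> R\<close> with
  \<open>r a(i) \<equiv> i (mod D)\<close>, unique modulo \<open>K = {x. r x \<in> D}\<close>, so \<open>i \<otimes> s \<mapsto> a(i) s\<close> respects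
  the defining relations of \<open>I \<otimes>\<^sub>R S\<close> modulo \<open>K S\<close>. Writing \<open>r = \<Sum> d\<^sub>k s\<^sub>k\<close> with
  \<open>d\<^sub>k \<in> D\<close>, flatness makes \<open>r \<otimes> 1 - \<Sum> d\<^sub>k \<otimes> s\<^sub>k\<close> a combination of those relations,
  whence \<open>a(r) \<in> K S\<close>; since \<open>1 - a(r) \<in> K\<close>, this gives \<open>K S = S\<close>.
\<close>

context ring
begin

lemma lift_add:
  assumes "right_ideal R D" "r \<in> carrier R" "x \<in> carrier R" "y \<in> carrier R" "i \<in> carrier R" "j \<in> carrier R"
    "r \<otimes> x \<ominus> i \<in> D" "r \<otimes> y \<ominus> j \<in> D"
  shows "r \<otimes> (x \<oplus> y) \<ominus> (i \<oplus> j) \<in> D"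
proof -
  have "r \<otimes> (x \<oplus> y) \<ominus> (i \<oplus> j) = (r \<otimes> x \<ominus> i) \<oplus> (r \<otimes> y \<ominus> j)"
    using assms(2-6) by algebra
  then show ?thesis using right_idealD(3)[OF assms(1,7,8)] by simp
qed

lemma lift_mult:
  assumes "right_ideal R D" "r \<in> carrier R" "x \<in> carrier R" "i \<in> carrier R" "t \<in> carrier R"
    "r \<otimes> x \<ominus> i \<in> D"
  shows "r \<otimes> (x \<otimes> t) \<ominus> i \<otimes> t \<in> D"
proof -
  have "r \<otimes> (x \<otimes> t) \<ominus> i \<otimes> t = (r \<otimes> x \<ominus> i) \<otimes> t"
    using assms(2-5) by algebra
  then show ?thesis using right_idealD(5)[OF assms(1,6,5)] by simp
qed

lemma lifts_diff_in_colon: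
  assumes "right_ideal R D" "r \<in> carrier R" "x \<in> carrier R" "y \<in> carrier R" "i \<in> carrier R"
    "r \<otimes> x \<ominus> i \<in> D" "r \<otimes> y \<ominus> i \<in> D"
  shows "x \<ominus> y \<in> {z \<in> carrier R. r \<otimes> z \<in> D}"
proof -
  have "r \<otimes> (x \<ominus> y) = (r \<otimes> x \<ominus> i) \<ominus> (r \<otimes> y \<ominus> i)"
    using assms(2-5) by algebra
  then show ?thesis using right_ideal_minus_closed[OF assms(1,6,7)] assms(3,4) by simp
qed

lemma lift_section_add_in_colon:
  assumes D: "right_ideal R D" and r: "r \<in> carrier R" and I: "right_ideal R I"
    and a: "\<And>i. i \<in> I \<Longrightarrow> a i \<in> carrier R" "\<And>i. i \<in> I \<Longrightarrow> r \<otimes> a i \<ominus> i \<in> D"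
    and i: "i \<in> I" "i' \<in> I"
  shows "a (i \<oplus> i') \<ominus> a i \<ominus> a i' \<in> {x \<in> carrier R. r \<otimes> x \<in> D}"
proof -
  have ii: "i \<oplus> i' \<in> I" using right_idealD(3)[OF I i] .
  have c: "i \<in> carrier R" "i' \<in> carrier R" "i \<oplus> i' \<in> carrier R" using i ii right_idealD(1)[OF I] by auto
  have "r \<otimes> (a i \<oplus> a i') \<ominus> (i \<oplus> i') \<in> D"
    using lift_add[OF D r a(1)[OF i(1)] a(1)[OF i(2)] c(1,2) a(2)[OF i(1)] a(2)[OF i(2)]] .
  then have "a (i \<oplus> i') \<ominus> (a i \<oplus> a i') \<in> {x \<in> carrier R. r \<otimes> x \<in> D}"
    using lifts_diff_in_colon[OF D r a(1)[OF ii] _ c(3) a(2)[OF ii]] a(1) i by blast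
  moreover have "a (i \<oplus> i') \<ominus> (a i \<oplus> a i') = a (i \<oplus> i') \<ominus> a i \<ominus> a i'"
    using a(1) i ii by algebra
  ultimately show ?thesis by simp
qed

lemma lift_section_mult_in_colon:
  assumes D: "right_ideal R D" and r: "r \<in> carrier R" and I: "right_ideal R I"
    and a: "\<And>i. i \<in> I \<Longrightarrow> a i \<in> carrier R" "\<And>i. i \<in> I \<Longrightarrow> r \<otimes> a i \<ominus> i \<in> D"
    and i: "i \<in> I" and t: "t \<in> carrier R"
  shows "a (i \<otimes> t) \<ominus> a i \<otimes> t \<in> {x \<in> carrier R. r \<otimes> x \<in> D}"
proof -
  have it: "i \<otimes> t \<in> I" using right_idealD(5)[OF I i t] .
  have c: "i \<in> carrier R" "i \<otimes> t \<in> carrier R" using i it right_idealD(1)[OF I] by auto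
  show ?thesis
    using lifts_diff_in_colon[OF D r a(1)[OF it] _ c(2) a(2)[OF it]]
      lift_mult[OF D r a(1)[OF i] c(1) t a(2)[OF i]] a(1)[OF i] t by blast
qed

lemma qemb_minus_mult:
  assumes "x \<in> carrier R" "y \<in> carrier R" "s \<in> Qmax_carrier R"
  shows "qmul R (qemb R (x \<ominus> y)) s = qmul R (qemb R x) s \<ominus>\<^bsub>Qmax R\<^esub> qmul R (qemb R y) s"
proof -
  interpret Q: ring "Qmax R" by (rule Qmax_ring)
  interpret h: ring_hom_ring R "Qmax R" "qemb R" by (rule ring_hom_ring_qemb)
  show ?thesis
    using assms qemb_closed Q.a_inv_closed[simplified]
    by (simp add: a_minus_def qmul_l_distr Q.l_minus[simplified])
qed

lemma add_minus_cancel: "a \<in> carrier R \<Longrightarrow> b \<in> carrier R \<Longrightarrow> a \<oplus> b \<ominus> b = a"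
  by algebra

lemma add_minus_minus_eq_zero: "a \<in> carrier R \<Longrightarrow> b \<in> carrier R \<Longrightarrow> a \<oplus> b \<ominus> a \<ominus> b = \<zero>"
  by algebra

lemma lincomb_lift_section_in_ideal_ext:
  assumes S: "overring S" and D: "right_ideal R D" and r: "r \<in> carrier R" and I: "right_ideal R I"
    and a: "\<And>i. i \<in> I \<Longrightarrow> a i \<in> carrier R" "\<And>i. i \<in> I \<Longrightarrow> r \<otimes> a i \<ominus> i \<in> D"
    and \<phi>: "\<phi> \<in> UNIV \<rightarrow> Qmax_carrier R" "\<And>i s. i \<in> I \<Longrightarrow> s \<in> S \<Longrightarrow> \<phi> (i, s) = qmul R (qemb R (a i)) s"
    and u: "u \<in> tensor_rel R I S" "finite T" "{p. u p \<noteq> 0} \<subseteq> T"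
  shows "lincomb (Qmax R) \<phi> T u \<in> ideal_ext R {x \<in> carrier R. r \<otimes> x \<in> D} S"
proof -
  interpret Q: ring "Qmax R" by (rule Qmax_ring)
  define K where "K = {x \<in> carrier R. r \<otimes> x \<in> D}"
  have Kc: "K \<subseteq> carrier R" unfolding K_def by blast
  have Sc: "s \<in> Qmax_carrier R" if "s \<in> S" for s using overringD(1)[OF S] that by blast
  note in_M = qemb_mult_in_ideal_ext[OF S _ Kc]
  show ?thesis unfolding K_def[symmetric]
  proof (rule Q.lincomb_tensor_rel_in_subgroup[OF _ _ _ _ _ _ u])
    show "\<phi> \<in> UNIV \<rightarrow> carrier (Qmax R)" using \<phi>(1) by simp
    show "\<zero>\<^bsub>Qmax R\<^esub> \<in> ideal_ext R K S" using ideal_ext_zero by simp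
    show "x \<ominus>\<^bsub>Qmax R\<^esub> y \<in> ideal_ext R K S" if "x \<in> ideal_ext R K S" "y \<in> ideal_ext R K S" for x y
      using ideal_ext_minus[OF S Kc that] .
  next
    fix i i' s assume iis: "i \<in> I" "i' \<in> I" "s \<in> S"
    have ii: "i \<oplus> i' \<in> I" using right_idealD(3)[OF I iis(1,2)] .
    have "a (i \<oplus> i') \<ominus> a i \<ominus> a i' \<in> K"
      unfolding K_def by (rule lift_section_add_in_colon[OF D r I a iis(1,2)])
    then have "qmul R (qemb R (a (i \<oplus> i') \<ominus> a i \<ominus> a i')) s \<in> ideal_ext R K S"
      using in_M iis(3) by simp
    then show "\<phi> (i \<oplus> i', s) \<ominus>\<^bsub>Qmax R\<^esub> \<phi> (i, s) \<ominus>\<^bsub>Qmax R\<^esub> \<phi> (i', s) \<in> ideal_ext R K S"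
      using \<phi>(2) a(1) iis ii Sc by (simp add: qemb_minus_mult)
  next
    fix i s s' assume iss: "i \<in> I" "s \<in> S" "s' \<in> S"
    have "\<phi> (i, qadd R s s') = qadd R (\<phi> (i, s)) (\<phi> (i, s'))"
      using \<phi>(2) iss overringD(3)[OF S] qmul_r_distr qemb_closed a(1) Sc by simp
    moreover have "\<phi> (i, s) \<in> Qmax_carrier R" "\<phi> (i, s') \<in> Qmax_carrier R"
      using \<phi>(1) by auto
    ultimately show "\<phi> (i, qadd R s s') \<ominus>\<^bsub>Qmax R\<^esub> \<phi> (i, s) \<ominus>\<^bsub>Qmax R\<^esub> \<phi> (i, s') \<in> ideal_ext R K S"
      using ring.add_minus_minus_eq_zero[OF Qmax_ring] ideal_ext_zero by simp
  next
    fix i t s assume its: "i \<in> I" "t \<in> carrier R" "s \<in> S"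
    have it: "i \<otimes> t \<in> I" using right_idealD(5)[OF I its(1,2)] .
    have "a (i \<otimes> t) \<ominus> a i \<otimes> t \<in> K"
      unfolding K_def by (rule lift_section_mult_in_colon[OF D r I a its(1,2)])
    then have "qmul R (qemb R (a (i \<otimes> t) \<ominus> a i \<otimes> t)) s \<in> ideal_ext R K S"
      using in_M its(3) by simp
    moreover have "qmul R (qemb R (a i \<otimes> t)) s = qmul R (qemb R (a i)) (qmul R (qemb R t) s)"
      using a(1) its Sc qemb_closed by (simp add: qemb_mult qmul_assoc)
    ultimately show "\<phi> (i \<otimes> t, s) \<ominus>\<^bsub>Qmax R\<^esub> \<phi> (i, qmul R (qemb R t) s) \<in> ideal_ext R K S"
      using \<phi>(2) a(1) its it Sc overringD(2,4)[OF S] by (simp add: qemb_minus_mult)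
  qed
qed

lemma flat_relationE:
  assumes S: "overring S" and flat: "left_flat_sub R S" and I: "right_ideal R I" "D \<subseteq> I" "r \<in> I"
    and r: "qemb R r \<in> ideal_ext R D S"
  obtains ys where "set ys \<subseteq> D \<times> S" "(\<lambda>p. \<Sum>x\<leftarrow>(r, qemb R \<one>) # ys. fdelta x p) \<in> tensor_rel R I S"
proof -
  interpret Q: ring "Qmax R" by (rule Qmax_ring)
  obtain zs where zs: "set zs \<subseteq> D \<times> S" "qemb R r = qsum R (map (qterm R) zs)"
    using r by (rule ideal_extE)
  define ys where "ys = map (\<lambda>(i, q). (i, \<ominus>\<^bsub>Qmax R\<^esub> q)) zs"
  have ys: "set ys \<subseteq> D \<times> S" using zs(1) overringD(5)[OF S] unfolding ys_def by auto
  have rc: "r \<in> carrier R" using I right_idealD(1) by blast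
  have "set zs \<subseteq> carrier R \<times> Qmax_carrier R"
    using zs(1) I(1,2) right_idealD(1) overringD(1)[OF S] by blast
  then have "qsum R (map (qterm R) ys) = \<ominus>\<^bsub>Qmax R\<^esub> qemb R r"
    unfolding ys_def zs(2) by (rule qsum_qterm_uminus)
  moreover have "qterm R (r, qemb R \<one>) = qemb R r"
    using qmul_one_right qemb_closed rc by (simp add: qterm_def)
  ultimately have "qsum R (map (qterm R) ((r, qemb R \<one>) # ys)) = qemb R \<zero>"
    using Q.r_neg qemb_closed[OF rc] by simp
  moreover have "set ((r, qemb R \<one>) # ys) \<subseteq> I \<times> S"
    using ys I(2,3) overringD(2)[OF S] by auto
  ultimately have "(\<lambda>p. \<Sum>x\<leftarrow>(r, qemb R \<one>) # ys. fdelta x p) \<in> tensor_rel R I S"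
    using flat I(1) unfolding left_flat_sub_def qterm_def by blast
  with ys show ?thesis by (rule that)
qed

lemma flat_lift_in_colon_ext:
  assumes S: "overring S" and flat: "left_flat_sub R S" and D: "right_ideal R D" "ideal_ext R D S = S"
    and r: "r \<in> carrier R" and I: "right_ideal R I" "D \<subseteq> I" "r \<in> I"
    and a: "\<And>i. i \<in> I \<Longrightarrow> a i \<in> carrier R" "\<And>i. i \<in> I \<Longrightarrow> r \<otimes> a i \<ominus> i \<in> D"
  shows "qemb R (a r) \<in> ideal_ext R {x \<in> carrier R. r \<otimes> x \<in> D} S"
proof -
  interpret Q: ring "Qmax R" by (rule Qmax_ring)
  define K where "K = {x \<in> carrier R. r \<otimes> x \<in> D}"
  have Kc: "K \<subseteq> carrier R" unfolding K_def by blast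
  define \<phi> where "\<phi> p = (if fst p \<in> I \<and> snd p \<in> Qmax_carrier R
    then qmul R (qemb R (a (fst p))) (snd p) else qemb R \<zero>)" for p
  have \<phi>: "\<phi> \<in> UNIV \<rightarrow> Qmax_carrier R" "\<And>i s. i \<in> I \<Longrightarrow> s \<in> S \<Longrightarrow> \<phi> (i, s) = qmul R (qemb R (a i)) s"
    unfolding \<phi>_def using a(1) overringD(1)[OF S] by (auto intro!: qmul_closed qemb_closed)
  obtain ys where ys: "set ys \<subseteq> D \<times> S" "(\<lambda>p. \<Sum>x\<leftarrow>(r, qemb R \<one>) # ys. fdelta x p) \<in> tensor_rel R I S"
    using flat_relationE[OF S flat I] D(2) overringD(2)[OF S r] by metis
  let ?xs = "(r, qemb R \<one>) # ys"
  have "lincomb (Qmax R) \<phi> (set ?xs) (\<lambda>p. \<Sum>x\<leftarrow>?xs. fdelta x p) \<in> ideal_ext R K S"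
    unfolding K_def using sum_list_fdelta_notin[of _ ?xs]
    by (intro lincomb_lift_section_in_ideal_ext[OF S D(1) r I(1) a \<phi> ys(2)]) auto
  moreover have "lincomb (Qmax R) \<phi> (set ?xs) (\<lambda>p. \<Sum>x\<leftarrow>?xs. fdelta x p) = qsum R (map \<phi> ?xs)"
    unfolding qsum_def by (rule Q.lincomb_sum_list_fdelta[simplified]) (use \<phi>(1) in auto)
  moreover have "\<phi> (r, qemb R \<one>) = qemb R (a r)"
    using \<phi>(2) I(3) overringD(2)[OF S one_closed] qmul_one_right qemb_closed a(1) by simp
  ultimately have sum: "qadd R (qemb R (a r)) (qsum R (map \<phi> ys)) \<in> ideal_ext R K S" by simp
  have aK: "a d \<in> K" if "d \<in> D" for d
  proof -
    have d: "d \<in> I" "d \<in> carrier R" using that I(2) right_idealD(1)[OF D(1)] by auto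
    then have "(r \<otimes> a d \<ominus> d) \<oplus> d = r \<otimes> a d" using a(1) r by algebra
    then show ?thesis unfolding K_def using right_idealD(3)[OF D(1) a(2)[OF d(1)] that] d a(1) by simp
  qed
  have "\<phi> (d, q) \<in> ideal_ext R K S" if "(d, q) \<in> set ys" for d q
  proof -
    have "d \<in> D" "q \<in> S" using subsetD[OF ys(1) that] by auto
    then show ?thesis using \<phi>(2) I(2) qemb_mult_in_ideal_ext[OF S aK Kc] by auto
  qed
  then have "set (map \<phi> ys) \<subseteq> ideal_ext R K S" by auto
  then have rest: "qsum R (map \<phi> ys) \<in> ideal_ext R K S" by (rule ideal_ext_qsum[OF S Kc])
  have "qadd R (qemb R (a r)) (qsum R (map \<phi> ys)) \<ominus>\<^bsub>Qmax R\<^esub> qsum R (map \<phi> ys) = qemb R (a r)"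
    using ring.add_minus_cancel[OF Qmax_ring] ideal_ext_subset[OF S Kc] overringD(1)[OF S] rest
      qemb_closed a(1) I(3) by auto
  then show ?thesis unfolding K_def[symmetric] using ideal_ext_minus[OF S Kc sum rest] by simp
qed

lemma flat_ideal_ext_colon:
  assumes S: "overring S" and flat: "left_flat_sub R S" and D: "right_ideal R D" "ideal_ext R D S = S"
    and r: "r \<in> carrier R"
  shows "ideal_ext R {x \<in> carrier R. r \<otimes> x \<in> D} S = S"
proof -
  define I where "I = lmult_plus r D"
  define K where "K = {x \<in> carrier R. r \<otimes> x \<in> D}"
  have Kc: "K \<subseteq> carrier R" unfolding K_def by blast
  have I: "right_ideal R I" and DI: "D \<subseteq> I" and rI: "r \<in> I"
    unfolding I_def using right_ideal_lmult_plus subset_lmult_plus self_in_lmult_plus D(1) r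
    by blast+
  have "\<forall>i\<in>I. \<exists>x. x \<in> carrier R \<and> r \<otimes> x \<ominus> i \<in> D"
    unfolding I_def using lmult_plus_lift_ex[OF D(1) r] by blast
  then obtain a where "\<forall>i\<in>I. a i \<in> carrier R \<and> r \<otimes> a i \<ominus> i \<in> D"
    by (rule bchoice[THEN exE])
  then have a: "\<And>i. i \<in> I \<Longrightarrow> a i \<in> carrier R" "\<And>i. i \<in> I \<Longrightarrow> r \<otimes> a i \<ominus> i \<in> D"
    by blast+
  have ar: "qemb R (a r) \<in> ideal_ext R K S"
    unfolding K_def by (rule flat_lift_in_colon_ext[OF S flat D r I DI rI a])
  have "r \<otimes> \<one> \<ominus> r \<in> D" using r right_idealD(2)[OF D(1)] by (simp add: a_minus_def r_neg)
  then have "\<one> \<ominus> a r \<in> K"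
    unfolding K_def by (rule lifts_diff_in_colon[OF D(1) r one_closed a(1)[OF rI] r _ a(2)[OF rI]])
  then have "qmul R (qemb R (\<one> \<ominus> a r)) (qemb R \<one>) \<in> ideal_ext R K S"
    using qemb_mult_in_ideal_ext[OF S _ Kc] overringD(2)[OF S one_closed] by blast
  then have "qemb R (\<one> \<ominus> a r) \<in> ideal_ext R K S"
    using qmul_one_right qemb_closed a(1)[OF rI] by simp
  then have "qadd R (qemb R (\<one> \<ominus> a r)) (qemb R (a r)) \<in> ideal_ext R K S"
    using ideal_ext_add[OF S Kc _ ar] by blast
  moreover have "(\<one> \<ominus> a r) \<oplus> a r = \<one>" using a(1)[OF rI] by algebra
  ultimately have "qemb R \<one> \<in> ideal_ext R K S"
    using qemb_add[of "\<one> \<ominus> a r" "a r"] a(1)[OF rI] by simp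
  then show ?thesis unfolding K_def[symmetric] by (rule ideal_ext_eq_if_one[OF S Kc])
qed

lemma flat_ideal_ext_preimage:
  assumes S: "overring S" and flat: "left_flat_sub R S" and D: "right_ideal R D" "ideal_ext R D S = S"
    and p: "qrep R p" "ideal_ext R (fst p) S = S"
  shows "ideal_ext R {x \<in> fst p. snd p x \<in> D} S = S"
proof -
  note P = qrepD[OF p(1)]
  define K where "K = {x \<in> fst p. snd p x \<in> D}"
  have Kc: "K \<subseteq> carrier R" unfolding K_def using P(3) by blast
  have dK: "qemb R d \<in> ideal_ext R K S" if d: "d \<in> fst p" for d
  proof -
    define C where "C = {x \<in> carrier R. snd p d \<otimes> x \<in> D}"
    have dc: "d \<in> carrier R" and Cc: "C \<subseteq> carrier R" using d P(3) unfolding C_def by auto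
    have "ideal_ext R C S = S" unfolding C_def by (rule flat_ideal_ext_colon[OF S flat D P(4)[OF d]])
    then have "qemb R \<one> \<in> ideal_ext R C S" using overringD(2)[OF S one_closed] by simp
    moreover have "d \<otimes> c \<in> K" if "c \<in> C" for c
      using that right_idealD(5)[OF P(2) d] P(6)[OF d] unfolding K_def C_def by auto
    ultimately have "qmul R (qemb R d) (qemb R \<one>) \<in> ideal_ext R K S"
      by (intro ideal_ext_mult_left[OF S Cc Kc dc])
    then show ?thesis using qmul_one_right qemb_closed[OF dc] by simp
  qed
  obtain xs where xs: "set xs \<subseteq> fst p \<times> S" "qemb R \<one> = qsum R (map (qterm R) xs)"
    using p(2) overringD(2)[OF S one_closed] by (metis ideal_extE)
  have "qterm R (d, q) \<in> ideal_ext R K S" if "(d, q) \<in> set xs" for d q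
  proof -
    have "d \<in> fst p" "q \<in> S" using subsetD[OF xs(1) that] by auto
    then show ?thesis using ideal_ext_mult_right[OF S Kc dK] by (simp add: qterm_def)
  qed
  then have "qemb R \<one> \<in> ideal_ext R K S"
    unfolding xs(2) by (intro ideal_ext_qsum[OF S Kc]) auto
  then show ?thesis unfolding K_def[symmetric] by (rule ideal_ext_eq_if_one[OF S Kc])
qed

end

section \<open>The filters \<open>\<E>\<^sub>\<alpha>\<close>\<close>

context ring
begin

definition quotient_filter :: "'a set set \<Rightarrow> bool" where
  "quotient_filter E \<longleftrightarrow> (\<forall>I\<in>E. right_ideal R I) \<and> carrier R \<in> E \<and>
     (\<forall>D\<in>E. \<forall>p. qrep R p \<and> fst p \<in> E \<longrightarrow> {x \<in> fst p. snd p x \<in> D} \<in> E)"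

lemma quotient_filterD:
  assumes "quotient_filter E"
  shows "\<And>I. I \<in> E \<Longrightarrow> right_ideal R I" "carrier R \<in> E"
    "\<And>D p. D \<in> E \<Longrightarrow> qrep R p \<Longrightarrow> fst p \<in> E \<Longrightarrow> {x \<in> fst p. snd p x \<in> D} \<in> E"
  using assms unfolding quotient_filter_def by blast+

lemma ring_of_quotientsI: "qrep R p \<Longrightarrow> fst p \<in> E \<Longrightarrow> qclass R p \<in> ring_of_quotients R E"
  unfolding ring_of_quotients_def using qclass_in_Qmax in_qclass by blast

lemma ring_of_quotientsE:
  assumes "A \<in> ring_of_quotients R E"
  obtains p where "qrep R p" "fst p \<in> E" "A = qclass R p"
  using assms Qmax_carrier_memD unfolding ring_of_quotients_def by blast

lemma overring_ring_of_quotients: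
  assumes "quotient_filter E"
  shows "overring (ring_of_quotients R E)"
proof -
  interpret Q: ring "Qmax R" by (rule Qmax_ring)
  note E = quotient_filterD[OF assms]
  have emb: "qemb R r \<in> ring_of_quotients R E" if "r \<in> carrier R" for r
    unfolding qemb_class using that E(2) by (intro ring_of_quotientsI qrep_remb) (auto simp: remb_def)
  have "subring (ring_of_quotients R E) (Qmax R)"
  proof (rule Q.subringI)
    show "ring_of_quotients R E \<subseteq> carrier (Qmax R)" unfolding ring_of_quotients_def by auto
    show "\<one>\<^bsub>Qmax R\<^esub> \<in> ring_of_quotients R E" using emb by simp
  next
    fix h assume "h \<in> ring_of_quotients R E"
    then obtain p where p: "qrep R p" "fst p \<in> E" "h = qclass R p" by (rule ring_of_quotientsE)
    show "\<ominus>\<^bsub>Qmax R\<^esub> h \<in> ring_of_quotients R E"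
      unfolding p(3) qneg_class[OF p(1)] using p
      by (intro ring_of_quotientsI qrep_rneg) (auto simp: rneg_def)
  next
    fix h1 h2 assume "h1 \<in> ring_of_quotients R E" "h2 \<in> ring_of_quotients R E"
    then obtain p q where p: "qrep R p" "fst p \<in> E" "h1 = qclass R p"
      and q: "qrep R q" "fst q \<in> E" "h2 = qclass R q" by (meson ring_of_quotientsE)
    have "{x \<in> fst q. snd q x \<in> fst p} \<in> E" using E(3)[OF p(2) q(1,2)] .
    then show "h1 \<otimes>\<^bsub>Qmax R\<^esub> h2 \<in> ring_of_quotients R E"
      unfolding p(3) q(3) Qmax_simps qmul_class[OF p(1) q(1)]
      by (intro ring_of_quotientsI qrep_rmul p q) (simp add: rmul_def)
    have "qrep R (fst q, \<lambda>x. x)"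
      using qrepD(1,3)[OF q(1)] unfolding qrep_def rhom_on_def by auto
    then have "{x \<in> fst q. x \<in> fst p} \<in> E" using E(3)[OF p(2)] q(2) by fastforce
    moreover have "{x \<in> fst q. x \<in> fst p} = fst p \<inter> fst q" by blast
    ultimately show "h1 \<oplus>\<^bsub>Qmax R\<^esub> h2 \<in> ring_of_quotients R E"
      unfolding p(3) q(3) Qmax_simps qadd_class[OF p(1) q(1)]
      by (intro ring_of_quotientsI qrep_radd p q) (simp add: radd_def)
  qed
  then show ?thesis unfolding overring_def using emb by auto
qed

lemma quotient_filter_dense: "quotient_filter {D. dense_right_ideal R D}"
  unfolding quotient_filter_def
  using dense_right_ideal_imp_right_ideal dense_right_ideal_carrier
  by (auto intro!: dense_right_ideal_preimage simp: qrep_def)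

lemma quotient_filter_Inter:
  assumes "\<And>g. g \<in> A \<Longrightarrow> quotient_filter (E g)" "A \<noteq> {}"
  shows "quotient_filter {I. right_ideal R I \<and> (\<forall>g\<in>A. I \<in> E g)}"
proof -
  obtain g0 where g0: "g0 \<in> A" using assms(2) by blast
  have preim: "{x \<in> fst p. snd p x \<in> D} \<in> E g"
    if "g \<in> A" "\<forall>g\<in>A. D \<in> E g" "qrep R p" "\<forall>g\<in>A. fst p \<in> E g" for g D p
    using quotient_filterD(3)[OF assms(1)[OF that(1)]] that by blast
  have "right_ideal R {x \<in> fst p. snd p x \<in> D}"
    if "\<forall>g\<in>A. D \<in> E g" "qrep R p" "\<forall>g\<in>A. fst p \<in> E g" for D p
    using quotient_filterD(1)[OF assms(1)[OF g0]] preim[OF g0 that] by blast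
  then show ?thesis unfolding quotient_filter_def
    using preim quotient_filterD(2)[OF assms(1)] right_ideal_carrier by auto
qed

lemma quotient_filter_succ:
  assumes E: "quotient_filter E" and C: "condition_C R"
  shows "quotient_filter {I. right_ideal R I \<and> ideal_ext R I (ring_of_quotients R E) = ring_of_quotients R E}"
proof -
  define S where "S = ring_of_quotients R E"
  have S: "overring S" unfolding S_def by (rule overring_ring_of_quotients[OF E])
  have flat: "left_flat_sub R S" using C S unfolding condition_C_def overring_def by blast
  have "right_ideal R {x \<in> fst p. snd p x \<in> D}" if "right_ideal R D" "qrep R p" for D p
    using right_ideal_preimage[OF that(1)] qrepD[OF that(2)] that(2) unfolding qrep_def by blast
  then show ?thesis unfolding quotient_filter_def S_def[symmetric]
    using ideal_ext_carrier[OF S] right_ideal_carrier flat_ideal_ext_preimage[OF S flat] by auto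
qed

end

lemma is_succ_pred_less:
  fixes \<alpha> :: "'o::wellorder"
  assumes "is_succ \<alpha>"
  shows "(THE \<beta>. \<beta> < \<alpha> \<and> (\<forall>\<gamma>. \<not> (\<beta> < \<gamma> \<and> \<gamma> < \<alpha>))) < \<alpha>"
proof -
  obtain \<beta> where \<beta>: "\<beta> < \<alpha>" "\<forall>\<gamma>. \<not> (\<beta> < \<gamma> \<and> \<gamma> < \<alpha>)" using assms unfolding is_succ_def by blast
  have "\<exists>!\<beta>. \<beta> < \<alpha> \<and> (\<forall>\<gamma>. \<not> (\<beta> < \<gamma> \<and> \<gamma> < \<alpha>))"
  proof (rule ex1I[of _ \<beta>])
    show "\<beta> < \<alpha> \<and> (\<forall>\<gamma>. \<not> (\<beta> < \<gamma> \<and> \<gamma> < \<alpha>))" using \<beta> by blast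
    show "\<beta>' = \<beta>" if "\<beta>' < \<alpha> \<and> (\<forall>\<gamma>. \<not> (\<beta>' < \<gamma> \<and> \<gamma> < \<alpha>))" for \<beta>'
      using that \<beta> by (cases \<beta>' \<beta> rule: linorder_cases) blast+
  qed
  from theI'[OF this] show ?thesis by blast
qed

lemma filt_seq_unfold: "filt_seq R \<alpha> = filt_step R (filt_seq R) \<alpha>"
proof -
  have "adm_wf {(x, y). x < y} (filt_step R :: ('o::wellorder \<Rightarrow> 'a set set) \<Rightarrow> 'o \<Rightarrow> 'a set set)"
    unfolding adm_wf_def
  proof (intro allI impI)
    fix f g :: "'o \<Rightarrow> 'a set set" and x :: 'o
    assume fg: "\<forall>z. (z, x) \<in> {(x, y). x < y} \<longrightarrow> f z = g z"
    show "filt_step R f x = filt_step R g x"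
    proof (cases "is_succ x")
      case True
      have "f (THE \<beta>. \<beta> < x \<and> (\<forall>\<gamma>. \<not> (\<beta> < \<gamma> \<and> \<gamma> < x)))
          = g (THE \<beta>. \<beta> < x \<and> (\<forall>\<gamma>. \<not> (\<beta> < \<gamma> \<and> \<gamma> < x)))"
        using fg is_succ_pred_less[OF True] by blast
      then show ?thesis unfolding filt_step_def Let_def using True by simp
    next
      case False
      have "(\<forall>\<beta><x. I \<in> f \<beta>) = (\<forall>\<beta><x. I \<in> g \<beta>)" for I using fg by auto
      then show ?thesis unfolding filt_step_def Let_def using False by simp
    qed
  qed
  then show ?thesis unfolding filt_seq_def by (rule fun_cong[OF wfrec_fixpoint[OF wf]])
qed

lemma filt_seq_succ:
  assumes "is_succ \<alpha>"
  obtains \<beta> where "\<beta> < \<alpha>" "filt_seq R \<alpha> = {I. right_ideal R I \<and>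
    ideal_ext R I (ring_of_quotients R (filt_seq R \<beta>)) = ring_of_quotients R (filt_seq R \<beta>)}"
proof -
  define \<beta> where "\<beta> = (THE \<beta>. \<beta> < \<alpha> \<and> (\<forall>\<gamma>. \<not> (\<beta> < \<gamma> \<and> \<gamma> < \<alpha>)))"
  have "\<beta> < \<alpha>" unfolding \<beta>_def by (rule is_succ_pred_less[OF assms])
  moreover have "filt_seq R \<alpha> = {I. right_ideal R I \<and>
    ideal_ext R I (ring_of_quotients R (filt_seq R \<beta>)) = ring_of_quotients R (filt_seq R \<beta>)}"
    by (subst filt_seq_unfold) (simp add: filt_step_def assms \<beta>_def Let_def)
  ultimately show ?thesis by (rule that)
qed

context ring
begin

lemma quotient_filter_filt_seq:
  fixes \<alpha> :: "'o::wellorder"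
  assumes C: "condition_C R"
  shows "quotient_filter (filt_seq R \<alpha>)"
proof (induction \<alpha> rule: less_induct)
  case (less \<alpha>)
  consider "is_succ \<alpha>" | "\<not> is_succ \<alpha>" "\<exists>\<beta>. \<beta> < \<alpha>" | "\<not> is_succ \<alpha>" "\<not> (\<exists>\<beta>. \<beta> < \<alpha>)" by blast
  then show ?case
  proof cases
    case 1
    then obtain \<beta> where "\<beta> < \<alpha>" and "filt_seq R \<alpha> = {I. right_ideal R I \<and>
      ideal_ext R I (ring_of_quotients R (filt_seq R \<beta>)) = ring_of_quotients R (filt_seq R \<beta>)}"
      by (rule filt_seq_succ)
    then show ?thesis using quotient_filter_succ[OF less.IH C] by simp
  next
    case 2
    then have "filt_seq R \<alpha> = {I. right_ideal R I \<and> (\<forall>\<beta>\<in>{\<beta>. \<beta> < \<alpha>}. I \<in> filt_seq R \<beta>)}"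
      by (subst filt_seq_unfold) (simp add: filt_step_def)
    then show ?thesis using quotient_filter_Inter[of "{\<beta>. \<beta> < \<alpha>}" "filt_seq R"] less.IH 2 by auto
  next
    case 3
    then have "filt_seq R \<alpha> = {D. dense_right_ideal R D}"
      by (subst filt_seq_unfold) (simp add: filt_step_def)
    then show ?thesis using quotient_filter_dense by simp
  qed
qed

lemma fg_right_idealE:
  assumes S: "overring S" and I: "right_ideal R I" "ideal_ext R I S = S"
  obtains J where "fg_right_ideal R J" "J \<subseteq> I" "ideal_ext R J S = S"
proof -
  have "qemb R \<one> \<in> ideal_ext R I S" using I(2) overringD(2)[OF S one_closed] by simp
  then obtain xs where xs: "set xs \<subseteq> I \<times> S" "qemb R \<one> = qsum R (map (qterm R) xs)"
    by (rule ideal_extE)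
  define J where "J = right_ideal_gen R (fst ` set xs)"
  have F: "fst ` set xs \<subseteq> I" "fst ` set xs \<subseteq> carrier R" using xs(1) right_idealD(1)[OF I(1)] by auto
  have "fg_right_ideal R J" unfolding J_def using F(2) by (intro fg_right_ideal_gen) auto
  moreover have JI: "J \<subseteq> I" unfolding J_def by (rule right_ideal_gen_minimal[OF I(1) F(1)])
  moreover have "set xs \<subseteq> J \<times> S"
  proof
    fix z assume z: "z \<in> set xs"
    then have "fst z \<in> J" unfolding J_def using right_ideal_gen_subset by blast
    moreover have "snd z \<in> S" using z xs(1) by auto
    ultimately show "z \<in> J \<times> S" by (simp add: mem_Times_iff)
  qed
  then have "qemb R \<one> \<in> ideal_ext R J S" unfolding xs(2) by (rule ideal_extI)
  then have "ideal_ext R J S = S"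
    using ideal_ext_eq_if_one[OF S] JI right_idealD(1)[OF I(1)] by blast
  ultimately show ?thesis by (rule that)
qed

end

theorem lemma4p1:
  fixes R :: "('a, 'm) ring_scheme" and \<alpha> :: "'o::wellorder"
  assumes "ring R"
    and "condition_C R"
    and "is_succ \<alpha>"
  shows "\<forall>I \<in> filt_seq R \<alpha>. \<exists>J \<in> filt_seq R \<alpha>. fg_right_ideal R J \<and> J \<subseteq> I"
proof
  interpret ring R by fact
  fix I assume I: "I \<in> filt_seq R \<alpha>"
  obtain \<beta> :: 'o where E\<alpha>: "filt_seq R \<alpha> = {I. right_ideal R I \<and>
    ideal_ext R I (ring_of_quotients R (filt_seq R \<beta>)) = ring_of_quotients R (filt_seq R \<beta>)}"
    using filt_seq_succ[OF assms(3)] by blast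
  let ?Q = "ring_of_quotients R (filt_seq R \<beta>)"
  have Q: "overring ?Q"
    by (rule overring_ring_of_quotients[OF quotient_filter_filt_seq[OF assms(2)]])
  have "right_ideal R I" "ideal_ext R I ?Q = ?Q" using I unfolding E\<alpha> by auto
  then obtain J where J: "fg_right_ideal R J" "J \<subseteq> I" "ideal_ext R J ?Q = ?Q"
    by (rule fg_right_idealE[OF Q])
  then have "J \<in> filt_seq R \<alpha>" unfolding E\<alpha> fg_right_ideal_def by simp
  with J show "\<exists>J \<in> filt_seq R \<alpha>. fg_right_ideal R J \<and> J \<subseteq> I" by blast
qed

end
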